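(* The families $\{X^{TSS}_\alpha,\ \alpha\in(0,1/2)\}$ and $\{X^{MTS}_\alpha,\ \alpha\in(0,1/2)\}$ are each uniformly tight.
   Context: Each process is considered as a semimartingale with respect to its (completed) natural filtration on $[0,1]$. Uniform tightness (UT): a family $\{Z^\alpha\}$ of semimartingales (each on its own filtered probability space $(\Omega^\alpha,\mathcal F^\alpha,(\mathcal F^\alpha_t),P^\alpha)$) is uniformly tight if for each $t\in(0,1]$ the set of random variables $\{\int_0^t H(s-)\,dZ^\alpha(s):\ H\in\mathcal H^\alpha,\ \alpha\}$ is bounded in probability uniformly in $\alpha$, i.e. $\lim_{K\to\infty}\sup P^\alpha(|\int_0^tH(s-)dZ^\alpha(s)|>K)=0$, where $\mathcal H^\alpha$ is the set of simple predictable processes $H(s)=H_0+\sum_{i=1}^m H_i1_{(t_i,t_{i+1}]}(s)$ with $0=t_0\le\dots\le t_{m+1}=t$, each $H_i$ being $\mathcal F^\alpha_{t_i}$-measurable with $|H_i|\le1$. Tempered stable subordinator $X^{TSS}_\alpha$: the driftless subordinator with Lévy measure $d\Lambda^{TSS}_\alpha(s)=\frac{1}{\Gamma(1-\alpha)}\frac{e^{-s}}{s^{1+\alpha}}1_{\{s>0\}}ds$. Modified tempered stable process $X^{MTS}_\alpha$, $\alpha\in(0,1/2)$: the Lévy process with triplet $(0,0,\Lambda^{MTS}_\alpha)$, $d\Lambda^{MTS}_\alpha(s)=\frac{1}{\pi}\frac{K_{\alpha+1/2}(|s|)}{|s|^{\alpha+1/2}}ds$ on $s\neq0$, where $K_\nu$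 is the modified Bessel function of the second kind. *)

theory Defs
  imports "HOL-Probability.Probability"
begin

text \<open>Standard integral representation, valid for x > 0 and all real nu:
  K_nu(x) = integral over [0,inf) of exp(-x cosh u) cosh(nu u) du.\<close>
definition bessel_K :: "real \<Rightarrow> real \<Rightarrow> real" where
  "bessel_K \<nu> x = (LINT u:{0..}|lborel. exp (- x * cosh u) * cosh (\<nu> * u))"

definition levy_measure_of_density :: "(real \<Rightarrow> real) \<Rightarrow> real measure" where
  "levy_measure_of_density f = density lborel (\<lambda>s. ennreal (f s))"

definition tss_density :: "real \<Rightarrow> real \<Rightarrow> real" where
  "tss_density \<alpha> s =
     (if s > 0 then exp (- s) / (Gamma (1 - \<alpha>) * s powr (1 + \<alpha>)) else 0)"

definition mts_density :: "real \<Rightarrow> real \<Rightarrow> real" where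
  "mts_density \<alpha> s =
     (if s \<noteq> 0 then bessel_K (\<alpha> + 1/2) \<bar>s\<bar> / (pi * \<bar>s\<bar> powr (\<alpha> + 1/2)) else 0)"

definition triplet_exponent :: "real \<Rightarrow> real \<Rightarrow> real measure \<Rightarrow> real \<Rightarrow> complex" where
  "triplet_exponent b c \<Lambda> u =
     \<i> * complex_of_real (b * u) - complex_of_real (c * u\<^sup>2 / 2)
     + (CLINT x|\<Lambda>. iexp (u * x) - 1 - \<i> * complex_of_real (u * x * indicator {-1..1} x))"

definition driftless_subordinator_exponent :: "real measure \<Rightarrow> real \<Rightarrow> complex" where
  "driftless_subordinator_exponent \<Lambda> u = (CLINT x|\<Lambda>. iexp (u * x) - 1)"

definition levy_process :: "'a measure \<Rightarrow> (real \<Rightarrow> 'a \<Rightarrow> real) \<Rightarrow> (real \<Rightarrow> complex) \<Rightarrow> bool" where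
  "levy_process M X \<psi> \<longleftrightarrow>
     prob_space M \<and>
     (\<forall>t\<ge>0. X t \<in> borel_measurable M) \<and>
     (AE \<omega> in M. X 0 \<omega> = 0) \<and>
     (AE \<omega> in M. \<forall>t\<ge>0. continuous (at_right t) (\<lambda>s. X s \<omega>) \<and>
                         (t > 0 \<longrightarrow> (\<exists>l. ((\<lambda>s. X s \<omega>) \<longlongrightarrow> l) (at_left t)))) \<and>
     (\<forall>(n::nat) (tt::nat \<Rightarrow> real). 0 \<le> tt 0 \<and> (\<forall>i<n. tt i \<le> tt (Suc i)) \<longrightarrow>
        prob_space.indep_vars M (\<lambda>_. borel) (\<lambda>i \<omega>. X (tt (Suc i)) \<omega> - X (tt i) \<omega>) {..<n}) \<and>
     (\<forall>s t u. 0 \<le> s \<and> s \<le> t \<longrightarrow>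
        char (distr M borel (\<lambda>\<omega>. X t \<omega> - X s \<omega>)) u = exp (complex_of_real (t - s) * \<psi> u))"

definition natural_sigma :: "'a measure \<Rightarrow> (real \<Rightarrow> 'a \<Rightarrow> real) \<Rightarrow> real \<Rightarrow> 'a measure" where
  "natural_sigma M X s =
     sigma (space M) {X r -` B \<inter> space M | r B. 0 \<le> r \<and> r \<le> s \<and> B \<in> sets borel}"

text \<open>H is measurable w.r.t. the completed natural filtration at time s: it agrees,
  outside a P-null set, with a sigma(X_r : r <= s)-measurable function.\<close>
definition completed_natural_measurable ::
    "'a measure \<Rightarrow> (real \<Rightarrow> 'a \<Rightarrow> real) \<Rightarrow> real \<Rightarrow> ('a \<Rightarrow> real) \<Rightarrow> bool" where
  "completed_natural_measurable M X s H \<longleftrightarrow>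
     (\<exists>G \<in> borel_measurable (natural_sigma M X s). AE \<omega> in M. H \<omega> = G \<omega>)"

text \<open>All random variables int_0^t H(s-) dX(s), H simple predictable,
  H(s) = H_0 + sum_{i=1}^m H_i 1_{(t_i,t_{i+1}]}(s), 0 = t_0 <= ... <= t_{m+1} = t,
  H_i measurable w.r.t. the completed natural filtration at t_i, |H_i| <= 1.\<close>
definition simple_integrals :: "'a measure \<Rightarrow> (real \<Rightarrow> 'a \<Rightarrow> real) \<Rightarrow> real \<Rightarrow> ('a \<Rightarrow> real) set" where
  "simple_integrals M X t =
     {(\<lambda>\<omega>. H 0 \<omega> * (X t \<omega> - X 0 \<omega>)
            + (\<Sum>i\<in>{1..m}. H i \<omega> * (X (tt (Suc i)) \<omega> - X (tt i) \<omega>))) |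
      (m::nat) (tt::nat \<Rightarrow> real) (H::nat \<Rightarrow> 'a \<Rightarrow> real).
        tt 0 = 0 \<and> tt (Suc m) = t \<and> (\<forall>i\<le>m. tt i \<le> tt (Suc i)) \<and>
        (\<forall>i\<le>m. completed_natural_measurable M X (tt i) (H i) \<and>
                (\<forall>\<omega>\<in>space M. \<bar>H i \<omega>\<bar> \<le> 1))}"

definition uniformly_tight :: "'i set \<Rightarrow> ('i \<Rightarrow> 'a measure) \<Rightarrow> ('i \<Rightarrow> real \<Rightarrow> 'a \<Rightarrow> real) \<Rightarrow> bool" where
  "uniformly_tight I M X \<longleftrightarrow>
     (\<forall>t\<in>{0<..1}.
        ((\<lambda>K. SUP a\<in>I. SUP Y\<in>simple_integrals (M a) (X a) t.
                 measure (completion (M a)) {\<omega> \<in> space (M a). \<bar>Y \<omega>\<bar> > K})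
          \<longlongrightarrow> 0) at_top)"

end

theory Submission
  imports Defs
begin

(*
  Call an exponent psi bounded by (V, C) if  Re psi(h) >= -V h^2/2  and  |Im psi(h)| <= C h
  for 0 < h <= 1. Then every increment of the Levy process has  E (X t - X s)^2 <=
  (t - s) V + ((t - s) C)^2  and  |E (X t - X s)| <= (t - s) C  (read off the characteristic
  function by Fatou's lemma and a Taylor estimate). Since increments are independent of the
  natural filtration, a simple integral with coefficients in [-1, 1] splits into two terms of
  second moment at most V + C^2 and a drift bounded by C, so by Chebyshev
  P(|Y| > K) <= 8 (V + C^2) / (K - C)^2  uniformly: any family of Levy processes with a common
  bound (V, C) is uniformly tight. The theorem follows since V and C are moments of the Levy
  measure: Gamma integrals for the tempered stable measure (V = C = 1), and a Bessel-kernel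
  integral estimated by Tonelli for the modified tempered stable measure (V = C = 4).
*)

lemma cos_sin_quadratic_bounds:
  fixes y :: real
  shows "\<bar>cos y - 1\<bar> \<le> y^2/2" and "\<bar>sin y - y\<bar> \<le> y^2/2"
proof -
  have rem: "cmod (iexp y - (1 + \<i> * y)) \<le> \<bar>y\<bar>^2/2"
    using iexp_approx1[of y 1] by (simp add: numeral_2_eq_2)
  have "\<bar>Re (iexp y - (1 + \<i> * y))\<bar> \<le> \<bar>y\<bar>^2/2"
    using abs_Re_le_cmod rem order_trans by blast
  then show "\<bar>cos y - 1\<bar> \<le> y^2/2" by (simp add: Re_exp)
  have "\<bar>Im (iexp y - (1 + \<i> * y))\<bar> \<le> \<bar>y\<bar>^2/2"
    using abs_Im_le_cmod rem order_trans by blast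
  then show "\<bar>sin y - y\<bar> \<le> y^2/2" by (simp add: Im_exp)
qed

text \<open>Third-order lower bound for \<open>1 - cos\<close>; it makes \<open>2 (1 - cos (h y)) / h\<^sup>2\<close>
  converge to \<open>y\<^sup>2\<close> from a controllable distance.\<close>
lemma one_minus_cos_lower: fixes y :: real shows "y^2/2 - y^4/24 \<le> 1 - cos y"
proof -
  have rem: "cmod (iexp y - (\<Sum>k \<le> 3. (\<i> * y)^k / fact k)) \<le> \<bar>y\<bar>^4/24"
    using iexp_approx1[of y 3] by (simp add: numeral_eq_Suc fact_numeral)
  have taylor: "(\<Sum>k \<le> 3. (\<i> * y)^k / fact k) = 1 + \<i> * y - y^2/2 - \<i> * y^3/6"
    by (simp add: numeral_eq_Suc fact_numeral power2_eq_square power3_eq_cube field_simps)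
  have "\<bar>Re (iexp y - (\<Sum>k \<le> 3. (\<i> * y)^k / fact k))\<bar> \<le> \<bar>y\<bar>^4/24"
    using abs_Re_le_cmod rem order_trans by blast
  moreover have "\<bar>y\<bar>^4 = y^4" by (simp add: power_abs[symmetric])
  ultimately have "\<bar>cos y - 1 + y^2/2\<bar> \<le> y^4/24"
    unfolding taylor by (simp add: Re_exp algebra_simps)
  then show ?thesis by linarith
qed

section \<open>Moments of a random variable from its characteristic function\<close>

text \<open>These two constants control the variance and the mean of all increments.\<close>
definition exponent_bounded :: "real \<Rightarrow> real \<Rightarrow> (real \<Rightarrow> complex) \<Rightarrow> bool" where
  "exponent_bounded V C \<psi> \<longleftrightarrow>
     (\<forall>h. 0 < h \<and> h \<le> 1 \<longrightarrow> - V * h^2 / 2 \<le> Re (\<psi> h) \<and> \<bar>Im (\<psi> h)\<bar> \<le> C * h)"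

lemma exponent_boundedD:
  assumes "exponent_bounded V C \<psi>" "0 < h" "h \<le> 1"
  shows "- V * h^2 / 2 \<le> Re (\<psi> h)" "\<bar>Im (\<psi> h)\<bar> \<le> C * h"
  using assms unfolding exponent_bounded_def by auto

lemma exponent_bounded_mono:
  assumes "exponent_bounded V C \<psi>" "V \<le> V'" "C \<le> C'"
  shows "exponent_bounded V' C' \<psi>"
  unfolding exponent_bounded_def
proof (intro allI impI conjI)
  fix h :: real assume h: "0 < h \<and> h \<le> 1"
  have "- V' * h^2 / 2 \<le> - V * h^2 / 2" using assms(2) by (simp add: divide_right_mono mult_right_mono)
  then show "- V' * h^2 / 2 \<le> Re (\<psi> h)" using exponent_boundedD(1)[OF assms(1), of h] h by linarith
  have "C * h \<le> C' * h" using assms(3) h by (simp add: mult_right_mono)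
  then show "\<bar>Im (\<psi> h)\<bar> \<le> C' * h" using exponent_boundedD(2)[OF assms(1), of h] h by linarith
qed

lemma exponent_bounded_nonneg: "exponent_bounded V C \<psi> \<Longrightarrow> 0 \<le> C"
  using exponent_boundedD(2)[of V C \<psi> 1] by simp

lemma char_distr_Re_Im:
  assumes "prob_space M" and D: "D \<in> borel_measurable M"
  shows "Re (char (distr M borel D) u) = (\<integral>x. cos (u * D x) \<partial>M)"
    and "Im (char (distr M borel D) u) = (\<integral>x. sin (u * D x) \<partial>M)"
proof -
  interpret prob_space M by fact
  have int: "integrable M (\<lambda>x. iexp (u * D x))" by (rule integrable_iexp) (use D in auto)
  have ch: "char (distr M borel D) u = (CLINT x|M. iexp (u * D x))"
    unfolding char_def using D by (subst integral_distr) auto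
  show "Re (char (distr M borel D) u) = (\<integral>x. cos (u * D x) \<partial>M)"
    unfolding ch by (subst integral_Re[OF int, symmetric]) (simp add: Re_exp)
  show "Im (char (distr M borel D) u) = (\<integral>x. sin (u * D x) \<partial>M)"
    unfolding ch by (subst integral_Im[OF int, symmetric]) (simp add: Im_exp)
qed

text \<open>If \<open>\<phi> = exp (\<Delta> \<psi>)\<close> is a characteristic function, the bounds on \<open>\<psi>\<close> transfer to
  \<open>1 - Re \<phi>\<close> and \<open>Im \<phi>\<close>; here \<open>|\<phi>| \<le> 1\<close> forces \<open>Re (\<Delta> \<psi>) \<le> 0\<close>.\<close>
lemma char_exp_bounds:
  assumes \<mu>: "real_distribution \<mu>" and ch: "char \<mu> h = exp (complex_of_real \<Delta> * \<psi> h)"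
    and \<Delta>: "0 \<le> \<Delta>" and re: "- V * h^2 / 2 \<le> Re (\<psi> h)" and im: "\<bar>Im (\<psi> h)\<bar> \<le> C * h"
  shows "1 - Re (char \<mu> h) \<le> \<Delta>*V*h^2/2 + (\<Delta>*C*h)^2/2"
    and "\<bar>Im (char \<mu> h)\<bar> \<le> \<Delta>*C*h"
proof -
  define z where "z = complex_of_real \<Delta> * \<psi> h"
  have "exp (Re z) \<le> 1" using real_distribution.cmod_char_le_1[OF \<mu>, of h] ch z_def by simp
  have z: "Re z = \<Delta> * Re (\<psi> h)" "Im z = \<Delta> * Im (\<psi> h)" by (simp_all add: z_def)
  have "- (\<Delta> * (V*h^2/2)) \<le> \<Delta> * Re (\<psi> h)"
    using mult_left_mono[OF re \<Delta>] by (simp add: algebra_simps)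
  then have re_z: "- Re z \<le> \<Delta>*V*h^2/2" using z by (simp add: algebra_simps)
  have im_z: "\<bar>Im z\<bar> \<le> \<Delta>*C*h" using mult_left_mono[OF im \<Delta>] z \<Delta> by (simp add: abs_mult mult.assoc)
  have "1 - exp (Re z) \<le> - Re z" using exp_ge_add_one_self[of "Re z"] by linarith
  moreover have "exp (Re z) * (1 - cos (Im z)) \<le> 1 * ((Im z)^2/2)"
    using \<open>exp (Re z) \<le> 1\<close> cos_sin_quadratic_bounds(1)[of "Im z"]
    by (intro mult_mono) auto
  moreover have "(Im z)^2 \<le> (\<Delta>*C*h)^2" using im_z by (metis abs_ge_zero power2_abs power_mono)
  moreover have "1 - Re (exp z) = (1 - exp (Re z)) + exp (Re z) * (1 - cos (Im z))"
    by (simp add: Re_exp algebra_simps)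
  ultimately show "1 - Re (char \<mu> h) \<le> \<Delta>*V*h^2/2 + (\<Delta>*C*h)^2/2"
    using ch re_z unfolding z_def by simp
  have "\<bar>Im (exp z)\<bar> = exp (Re z) * \<bar>sin (Im z)\<bar>" by (simp add: Im_exp abs_mult)
  also have "\<dots> \<le> 1 * \<bar>Im z\<bar>"
    using \<open>exp (Re z) \<le> 1\<close> abs_sin_x_le_abs_x[of "Im z"] by (intro mult_mono) auto
  finally show "\<bar>Im (char \<mu> h)\<bar> \<le> \<Delta>*C*h" using ch im_z unfolding z_def by simp
qed

text \<open>\<open>2 (1 - cos (h y)) / h\<^sup>2 \<rightarrow> y\<^sup>2\<close> along any positive null sequence; only the lower
  half of this limit is needed, and it follows from the third-order bound for cosine.\<close>
lemma cos_quotient_liminf: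
  fixes y :: real and hh :: "nat \<Rightarrow> real"
  assumes hh: "\<And>n. 0 < hh n" and hh0: "hh \<longlonglongrightarrow> 0"
  shows "ennreal (y^2) \<le> liminf (\<lambda>n. ennreal (2 * (1 - cos (hh n * y)) / (hh n)^2))"
proof -
  have low: "ennreal (y^2 - (hh n)^2 * y^4 / 12) \<le> ennreal (2 * (1 - cos (hh n * y)) / (hh n)^2)" for n
  proof -
    have "2 * ((hh n * y)^2/2 - (hh n * y)^4/24) / (hh n)^2 \<le> 2 * (1 - cos (hh n * y)) / (hh n)^2"
      using hh[of n] one_minus_cos_lower[of "hh n * y"] by (intro divide_right_mono mult_left_mono) auto
    moreover have "2 * ((hh n * y)^2/2 - (hh n * y)^4/24) / (hh n)^2 = y^2 - (hh n)^2 * y^4 / 12"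
      using hh[of n] by (simp add: field_simps power2_eq_square power4_eq_xxxx)
    ultimately show ?thesis by (intro ennreal_leI) simp
  qed
  have "(\<lambda>n. y^2 - (hh n)^2 * y^4 / 12) \<longlonglongrightarrow> y^2 - 0^2 * y^4 / 12"
    by (intro tendsto_intros hh0) simp
  then have "(\<lambda>n. ennreal (y^2 - (hh n)^2 * y^4 / 12)) \<longlonglongrightarrow> ennreal (y^2)"
    by (intro tendsto_ennrealI) simp
  then have "ennreal (y^2) = liminf (\<lambda>n. ennreal (y^2 - (hh n)^2 * y^4 / 12))"
    by (simp add: lim_imp_Liminf)
  also have "\<dots> \<le> liminf (\<lambda>n. ennreal (2 * (1 - cos (hh n * y)) / (hh n)^2))"
    by (intro Liminf_mono) (use low in auto)
  finally show ?thesis .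
qed

text \<open>Second moment by Fatou's lemma: \<open>2 (1 - cos (h D)) / h\<^sup>2 \<rightarrow> D\<^sup>2\<close> as \<open>h \<rightarrow> 0\<close>, so a
  uniform bound on the expectations of the former bounds \<open>E D\<^sup>2\<close>.\<close>
lemma second_moment_from_cos:
  fixes D :: "'a \<Rightarrow> real"
  assumes "prob_space M" and D: "D \<in> borel_measurable M"
    and bound: "\<And>h. 0 < h \<Longrightarrow> h \<le> 1 \<Longrightarrow> (\<integral>x. 2 * (1 - cos (h * D x)) / h^2 \<partial>M) \<le> B"
  shows "integrable M (\<lambda>x. (D x)^2)" and "(\<integral>x. (D x)^2 \<partial>M) \<le> B"
proof -
  interpret prob_space M by fact
  have nonneg: "0 \<le> (\<integral>x. 2 * (1 - cos (1 * D x)) / (1::real)^2 \<partial>M)"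
    by (rule integral_nonneg_AE) auto
  have B0: "0 \<le> B" using order_trans[OF nonneg bound[of 1]] by simp
  define hh where "hh n = 1 / (real n + 1)" for n :: nat
  have hh: "0 < hh n" "hh n \<le> 1" for n unfolding hh_def by auto
  have hh0: "hh \<longlonglongrightarrow> 0"
    unfolding hh_def using LIMSEQ_inverse_real_of_nat by (simp add: inverse_eq_divide add.commute)
  define u where "u n x = ennreal (2 * (1 - cos (hh n * D x)) / (hh n)^2)" for n x
  have u_meas: "u n \<in> borel_measurable M" for n unfolding u_def using D by measurable
  have u_int: "integral\<^sup>N M (u n) \<le> ennreal B" for n
  proof -
    have "integrable M (\<lambda>x. cos (hh n * D x))"
      by (rule integrable_const_bound[of _ 1]) (use D in auto)
    then have "integral\<^sup>N M (u n) = ennreal (\<integral>x. 2 * (1 - cos (hh n * D x)) / (hh n)^2 \<partial>M)"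
      unfolding u_def by (intro nn_integral_eq_integral) auto
    also have "\<dots> \<le> ennreal B" using bound[OF hh] by (rule ennreal_leI)
    finally show ?thesis .
  qed
  have u_lim: "ennreal ((D x)^2) \<le> liminf (\<lambda>n. u n x)" for x
    unfolding u_def by (rule cos_quotient_liminf[OF hh(1) hh0])
  have nn: "(\<integral>\<^sup>+x. ennreal ((D x)^2) \<partial>M) \<le> ennreal B"
  proof -
    have "(\<integral>\<^sup>+x. ennreal ((D x)^2) \<partial>M) \<le> (\<integral>\<^sup>+x. liminf (\<lambda>n. u n x) \<partial>M)"
      by (intro nn_integral_mono u_lim)
    also have "\<dots> \<le> liminf (\<lambda>n. integral\<^sup>N M (u n))" by (rule nn_integral_liminf[OF u_meas])
    also have "\<dots> \<le> ennreal B"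
      by (rule order_trans[OF Liminf_le_Limsup Limsup_bounded]) (auto intro: always_eventually u_int)
    finally show ?thesis .
  qed
  show int: "integrable M (\<lambda>x. (D x)^2)"
    using D le_less_trans[OF nn ennreal_less_top] by (intro integrableI_bounded) auto
  have "(\<integral>x. (D x)^2 \<partial>M) = enn2real (\<integral>\<^sup>+x. ennreal ((D x)^2) \<partial>M)"
    by (rule integral_eq_nn_integral) (use D in auto)
  also have "\<dots> \<le> B" using enn2real_mono[OF nn ennreal_less_top] B0 by simp
  finally show "(\<integral>x. (D x)^2 \<partial>M) \<le> B" .
qed

text \<open>Mean by dominated approximation: \<open>sin (h D) / h\<close> differs from \<open>D\<close> by at most
  \<open>h D\<^sup>2 / 2\<close>, so a bound \<open>c h\<close> on \<open>E sin (h D)\<close> yields \<open>|E D| \<le> c\<close>.\<close>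
lemma mean_from_sin:
  fixes D :: "'a \<Rightarrow> real"
  assumes "prob_space M" and D: "D \<in> borel_measurable M" and D2: "integrable M (\<lambda>x. (D x)^2)"
    and bound: "\<And>h. 0 < h \<Longrightarrow> h \<le> 1 \<Longrightarrow> \<bar>\<integral>x. sin (h * D x) \<partial>M\<bar> \<le> c * h"
  shows "\<bar>\<integral>x. D x \<partial>M\<bar> \<le> c"
proof -
  interpret prob_space M by fact
  have DI: "integrable M D" by (rule square_integrable_imp_integrable[OF D D2])
  define m2 where "m2 = (\<integral>x. (D x)^2 \<partial>M)"
  have approx: "\<bar>\<integral>x. D x \<partial>M\<bar> \<le> c + h * m2 / 2" if h: "0 < h" "h \<le> 1" for h
  proof -
    have sinI: "integrable M (\<lambda>x. sin (h * D x))"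
      by (rule integrable_const_bound[of _ 1]) (use D in auto)
    have pt: "\<bar>D x - sin (h * D x) / h\<bar> \<le> h * (D x)^2 / 2" for x
    proof -
      have "\<bar>sin (h * D x) - h * D x\<bar> / h \<le> (h * D x)^2/2 / h"
        using h cos_sin_quadratic_bounds(2)[of "h * D x"] by (intro divide_right_mono) auto
      moreover have "\<bar>sin (h * D x) - h * D x\<bar> / h = \<bar>D x - sin (h * D x) / h\<bar>"
        using h by (simp add: field_simps abs_divide abs_minus_commute)
      moreover have "(h * D x)^2/2 / h = h * (D x)^2 / 2"
        using h by (simp add: field_simps power2_eq_square)
      ultimately show ?thesis by simp
    qed
    have "\<bar>(\<integral>x. D x \<partial>M) - (\<integral>x. sin (h * D x) / h \<partial>M)\<bar> = \<bar>\<integral>x. D x - sin (h * D x) / h \<partial>M\<bar>"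
      using DI sinI by (subst Bochner_Integration.integral_diff) auto
    also have "\<dots> \<le> (\<integral>x. \<bar>D x - sin (h * D x) / h\<bar> \<partial>M)" by (rule integral_abs_bound)
    also have "\<dots> \<le> (\<integral>x. h * (D x)^2 / 2 \<partial>M)"
      using DI sinI D2 pt by (intro integral_mono) auto
    also have "\<dots> = h * m2 / 2" by (simp add: m2_def)
    finally have close: "\<bar>(\<integral>x. D x \<partial>M) - (\<integral>x. sin (h * D x) / h \<partial>M)\<bar> \<le> h * m2 / 2" .
    have "\<bar>\<integral>x. sin (h * D x) / h \<partial>M\<bar> = \<bar>\<integral>x. sin (h * D x) \<partial>M\<bar> / h" using h by simp
    also have "\<dots> \<le> c" using bound[OF h] h by (simp add: divide_le_eq)
    finally show ?thesis using close by linarith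
  qed
  define hh where "hh n = 1 / (real n + 1)" for n :: nat
  have hh: "0 < hh n" "hh n \<le> 1" for n unfolding hh_def by auto
  have hh0: "hh \<longlonglongrightarrow> 0"
    unfolding hh_def using LIMSEQ_inverse_real_of_nat by (simp add: inverse_eq_divide add.commute)
  have "(\<lambda>n. c + hh n * m2 / 2) \<longlonglongrightarrow> c + 0 * m2 / 2" by (intro tendsto_intros hh0) simp
  then show ?thesis
    by (intro LIMSEQ_le_const[where X="\<lambda>n. c + hh n * m2 / 2"]) (use approx[OF hh] in auto)
qed

lemma moments_from_exponent:
  fixes D :: "'a \<Rightarrow> real"
  assumes P: "prob_space M" and D: "D \<in> borel_measurable M" and \<Delta>: "0 \<le> \<Delta>"
    and \<psi>: "exponent_bounded V C \<psi>"
    and ch: "\<And>u. char (distr M borel D) u = exp (complex_of_real \<Delta> * \<psi> u)"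
  shows "integrable M (\<lambda>x. (D x)^2)" and "(\<integral>x. (D x)^2 \<partial>M) \<le> \<Delta>*V + (\<Delta>*C)^2"
    and "\<bar>\<integral>x. D x \<partial>M\<bar> \<le> \<Delta>*C"
proof -
  interpret prob_space M by fact
  have \<mu>: "real_distribution (distr M borel D)" by (rule real_distribution_distr[OF D])
  have bounds: "1 - Re (char (distr M borel D) h) \<le> \<Delta>*V*h^2/2 + (\<Delta>*C*h)^2/2"
      "\<bar>Im (char (distr M borel D) h)\<bar> \<le> \<Delta>*C*h" if "0 < h" "h \<le> 1" for h
    using char_exp_bounds[where \<psi>=\<psi>, OF \<mu> ch \<Delta> exponent_boundedD[OF \<psi> that]] by auto
  note RI = char_distr_Re_Im[OF P D]
  have cos_bound: "(\<integral>x. 2 * (1 - cos (h * D x)) / h^2 \<partial>M) \<le> \<Delta>*V + (\<Delta>*C)^2"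
    if h: "0 < h" "h \<le> 1" for h
  proof -
    have "integrable M (\<lambda>x. cos (h * D x))"
      by (rule integrable_const_bound[of _ 1]) (use D in auto)
    then have "(\<integral>x. 2 * (1 - cos (h * D x)) / h^2 \<partial>M) = 2 * (1 - Re (char (distr M borel D) h)) / h^2"
      by (simp add: RI prob_space)
    also have "\<dots> \<le> 2 * (\<Delta>*V*h^2/2 + (\<Delta>*C*h)^2/2) / h^2"
      using bounds(1)[OF h] h by (intro divide_right_mono mult_left_mono) auto
    also have "\<dots> = \<Delta>*V + (\<Delta>*C)^2" using h by (simp add: field_simps power2_eq_square)
    finally show ?thesis .
  qed
  show D2: "integrable M (\<lambda>x. (D x)^2)" and "(\<integral>x. (D x)^2 \<partial>M) \<le> \<Delta>*V + (\<Delta>*C)^2"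
    using second_moment_from_cos[OF P D cos_bound] by auto
  show "\<bar>\<integral>x. D x \<partial>M\<bar> \<le> \<Delta>*C"
    by (rule mean_from_sin[OF P D D2]) (use bounds(2) RI in \<open>auto simp: mult.assoc\<close>)
qed

lemma levy_processD:
  assumes "levy_process M X \<psi>"
  shows "prob_space M" and "\<And>t. 0 \<le> t \<Longrightarrow> X t \<in> borel_measurable M"
    and "AE \<omega> in M. X 0 \<omega> = 0"
    and "\<And>n tt. 0 \<le> tt 0 \<Longrightarrow> (\<forall>i<n. tt i \<le> tt (Suc i)) \<Longrightarrow>
        prob_space.indep_vars M (\<lambda>_. borel) (\<lambda>i \<omega>. X (tt (Suc i)) \<omega> - X (tt i) \<omega>) {..<n}"
    and "\<And>s t u. 0 \<le> s \<Longrightarrow> s \<le> t \<Longrightarrow>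
        char (distr M borel (\<lambda>\<omega>. X t \<omega> - X s \<omega>)) u = exp (complex_of_real (t - s) * \<psi> u)"
  using assms unfolding levy_process_def by auto

lemma levy_increment_moments:
  assumes L: "levy_process M X \<psi>" and \<psi>: "exponent_bounded V C \<psi>" and st: "0 \<le> s" "s \<le> t"
  shows "integrable M (\<lambda>\<omega>. (X t \<omega> - X s \<omega>)^2)"
    and "(\<integral>\<omega>. (X t \<omega> - X s \<omega>)^2 \<partial>M) \<le> (t - s)*V + ((t - s)*C)^2"
    and "\<bar>\<integral>\<omega>. X t \<omega> - X s \<omega> \<partial>M\<bar> \<le> (t - s)*C"
proof -
  have D: "(\<lambda>\<omega>. X t \<omega> - X s \<omega>) \<in> borel_measurable M"
    using levy_processD(2)[OF L] st by (intro borel_measurable_diff) auto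
  note m = moments_from_exponent[OF levy_processD(1)[OF L] D _ \<psi> levy_processD(5)[OF L st]]
  from m st show "integrable M (\<lambda>\<omega>. (X t \<omega> - X s \<omega>)^2)"
    and "(\<integral>\<omega>. (X t \<omega> - X s \<omega>)^2 \<partial>M) \<le> (t - s)*V + ((t - s)*C)^2"
    and "\<bar>\<integral>\<omega>. X t \<omega> - X s \<omega> \<partial>M\<bar> \<le> (t - s)*C" by auto
qed

definition natural_generators :: "'a measure \<Rightarrow> (real \<Rightarrow> 'a \<Rightarrow> real) \<Rightarrow> real \<Rightarrow> 'a set set" where
  "natural_generators M X s = {X r -` B \<inter> space M | r B. 0 \<le> r \<and> r \<le> s \<and> B \<in> sets borel}"

lemma natural_generators_Pow: "natural_generators M X s \<subseteq> Pow (space M)"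
  unfolding natural_generators_def by auto

lemma space_natural_sigma[simp]: "space (natural_sigma M X s) = space M"
  unfolding natural_sigma_def using natural_generators_Pow[of M X s]
  by (simp add: natural_generators_def space_measure_of_conv)

lemma sets_natural_sigma:
  "sets (natural_sigma M X s) = sigma_sets (space M) (natural_generators M X s)"
  unfolding natural_sigma_def using natural_generators_Pow[of M X s]
  by (simp add: natural_generators_def)

lemma measurable_natural_sigma_mono:
  assumes "f \<in> borel_measurable (natural_sigma M X s)" "s \<le> s'"
  shows "f \<in> borel_measurable (natural_sigma M X s')"
proof -
  have "sets (natural_sigma M X s) \<subseteq> sets (natural_sigma M X s')"
    unfolding sets_natural_sigma
    by (rule sigma_sets_mono') (use assms(2) in \<open>fastforce simp: natural_generators_def\<close>)
  then show ?thesis using assms(1) by (auto simp: measurable_def)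
qed

lemma X_measurable_natural_sigma:
  assumes "0 \<le> r" "r \<le> s" shows "X r \<in> borel_measurable (natural_sigma M X s)"
proof (rule measurableI)
  fix A :: "real set" assume "A \<in> sets borel"
  then have "X r -` A \<inter> space M \<in> natural_generators M X s"
    using assms unfolding natural_generators_def by auto
  then show "X r -` A \<inter> space (natural_sigma M X s) \<in> sets (natural_sigma M X s)"
    unfolding sets_natural_sigma by auto
qed auto

lemma natural_sigma_subalgebra:
  assumes "\<And>r. 0 \<le> r \<Longrightarrow> X r \<in> borel_measurable M"
  shows "subalgebra M (natural_sigma M X s)"
  unfolding subalgebra_def
proof
  show "sets (natural_sigma M X s) \<subseteq> sets M" unfolding sets_natural_sigma
    by (rule sets.sigma_sets_subset)
       (use assms in \<open>auto simp: natural_generators_def intro: measurable_sets\<close>)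
qed simp

lemma natural_measurable_imp_measurable:
  assumes "\<And>r. 0 \<le> r \<Longrightarrow> X r \<in> borel_measurable M"
    and "f \<in> borel_measurable (natural_sigma M X s)"
  shows "f \<in> borel_measurable M"
  by (rule measurable_from_subalg[OF natural_sigma_subalgebra[OF assms(1)] assms(2)])

section \<open>Increments are independent of the past\<close>

lemma finite_time_grid:
  fixes R :: "real set"
  assumes R: "finite R" "R \<subseteq> {0..s}" and st: "0 \<le> s" "s \<le> t"
  obtains N tt idx where "tt 0 = 0" "\<And>i. tt i \<le> tt (Suc i)" "tt N = s" "tt (Suc N) = t"
    "\<And>r. r \<in> R \<Longrightarrow> idx r < N \<and> tt (idx r) = r"
proof -
  define Lst where "Lst = sorted_list_of_set (insert 0 R)"
  define N where "N = length Lst"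
  have setL: "set Lst = insert 0 R"
    unfolding Lst_def by (rule set_sorted_list_of_set) (use R in simp)
  have sortL: "sorted Lst" using Lst_def by simp
  have range: "0 \<le> x \<and> x \<le> s" if "x \<in> set Lst" for x using that R st setL by auto
  have N: "0 < N" using setL N_def by (cases Lst) auto
  define tt where "tt j = (if j < N then Lst ! j else if j = N then s else t)" for j
  have "tt 0 = 0"
  proof -
    obtain k where k: "k < N" "Lst ! k = 0"
      using setL by (metis in_set_conv_nth insertI1 N_def)
    have "Lst ! 0 \<le> Lst ! k" using sortL k by (intro sorted_nth_mono) (auto simp: N_def)
    moreover have "0 \<le> Lst ! 0" using range N N_def nth_mem by blast
    ultimately show ?thesis using k N tt_def by simp
  qed
  moreover have "tt i \<le> tt (Suc i)" for i
    using sortL st range[OF nth_mem, of i] unfolding tt_def by (auto simp: N_def intro!: sorted_nth_mono)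
  moreover have "\<exists>j. j < N \<and> tt j = r" if "r \<in> R" for r
  proof -
    have "r \<in> set Lst" using that setL by auto
    then obtain j where "j < N" "Lst ! j = r" by (auto simp: in_set_conv_nth N_def)
    then show ?thesis by (auto simp: tt_def)
  qed
  then obtain idx where "\<And>r. r \<in> R \<Longrightarrow> idx r < N \<and> tt (idx r) = r" by metis
  moreover have "tt N = s" "tt (Suc N) = t" by (simp_all add: tt_def)
  ultimately show ?thesis using that by blast
qed

lemma (in prob_space) indep_vars_init_last:
  fixes I :: "nat \<Rightarrow> 'a \<Rightarrow> real"
  assumes ind: "indep_vars (\<lambda>_. borel) I {..<Suc N}"
    and F: "F \<in> sets (PiM {..<N} (\<lambda>_. borel))" and A: "A \<in> sets borel"
  defines "init \<equiv> \<lambda>\<omega>. \<lambda>i\<in>{..<N}. I i \<omega>"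
  shows "prob (init -` F \<inter> (I N -` A \<inter> space M)) = prob (init -` F \<inter> space M) * prob (I N -` A \<inter> space M)"
proof -
  have rv: "random_variable borel (I i)" if "i \<le> N" for i
    using ind that unfolding indep_vars_def by auto
  define last where "last = (\<lambda>\<omega>. \<lambda>i\<in>{N}. I i \<omega>)"
  define A' where "A' = {f \<in> space (PiM {N} (\<lambda>_. borel::real measure)). f N \<in> A}"
  have A': "A' \<in> sets (PiM {N} (\<lambda>_. borel))"
    unfolding A'_def using A by measurable
  have "indep_var (PiM {..<N} (\<lambda>_. borel)) init (PiM {N} (\<lambda>_. borel)) last"
    unfolding init_def last_def by (rule indep_var_restrict[OF ind]) auto
  from indep_varD[OF this F A']
  have "prob ((\<lambda>\<omega>. (init \<omega>, last \<omega>)) -` (F \<times> A') \<inter> space M) =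
        prob (init -` F \<inter> space M) * prob (last -` A' \<inter> space M)" .
  moreover have "last -` A' \<inter> space M = I N -` A \<inter> space M"
    using measurable_space[OF rv[of N]] by (auto simp: last_def A'_def space_PiM)
  moreover have "(\<lambda>\<omega>. (init \<omega>, last \<omega>)) -` (F \<times> A') \<inter> space M = init -` F \<inter> (I N -` A \<inter> space M)"
    using measurable_space[OF rv[of N]] by (auto simp: last_def A'_def space_PiM)
  ultimately show ?thesis by simp
qed

definition past_cylinders :: "'a measure \<Rightarrow> (real \<Rightarrow> 'a \<Rightarrow> real) \<Rightarrow> real \<Rightarrow> 'a set set" where
  "past_cylinders M X s = {{\<omega>\<in>space M. \<forall>r\<in>R. X r \<omega> \<in> B r} | R B.
      finite R \<and> R \<subseteq> {0..s} \<and> (\<forall>r\<in>R. B r \<in> sets borel)}"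

lemma past_cylinders_events:
  assumes Xm: "\<And>r. 0 \<le> r \<Longrightarrow> X r \<in> borel_measurable M"
  shows "past_cylinders M X s \<subseteq> sets M"
proof
  fix E assume "E \<in> past_cylinders M X s"
  then obtain R B where E: "E = {\<omega>\<in>space M. \<forall>r\<in>R. X r \<omega> \<in> B r}" and R: "finite R" "R \<subseteq> {0..s}"
    and B: "\<forall>r\<in>R. B r \<in> sets borel" unfolding past_cylinders_def by auto
  show "E \<in> sets M" unfolding E
    by (rule sets.sets_Collect_finite_All[OF _ R(1)]) (use Xm R B in \<open>auto intro: measurable_sets_Collect\<close>)
qed

lemma past_cylinders_Int_stable: "Int_stable (past_cylinders M X s)"
  unfolding Int_stable_def
proof safe
  fix a b assume "a \<in> past_cylinders M X s" "b \<in> past_cylinders M X s"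
  then obtain R1 B1 R2 B2 where a: "a = {\<omega>\<in>space M. \<forall>r\<in>R1. X r \<omega> \<in> B1 r}"
    and R1: "finite R1" "R1 \<subseteq> {0..s}" and B1: "\<forall>r\<in>R1. B1 r \<in> sets borel"
    and b: "b = {\<omega>\<in>space M. \<forall>r\<in>R2. X r \<omega> \<in> B2 r}"
    and R2: "finite R2" "R2 \<subseteq> {0..s}" and B2: "\<forall>r\<in>R2. B2 r \<in> sets borel"
    unfolding past_cylinders_def by blast
  define B where "B r = (if r \<in> R1 then B1 r else UNIV) \<inter> (if r \<in> R2 then B2 r else UNIV)" for r
  have "a \<inter> b = {\<omega>\<in>space M. \<forall>r\<in>R1 \<union> R2. X r \<omega> \<in> B r}" unfolding a b B_def by auto
  moreover have "\<forall>r\<in>R1 \<union> R2. B r \<in> sets borel" unfolding B_def using B1 B2 by auto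
  ultimately show "a \<inter> b \<in> past_cylinders M X s" unfolding past_cylinders_def using R1 R2 by blast
qed

lemma natural_sigma_past_cylinders:
  "sets (natural_sigma M X s) \<subseteq> sigma_sets (space M) (past_cylinders M X s)"
  unfolding sets_natural_sigma
proof (rule sigma_sets_mono')
  show "natural_generators M X s \<subseteq> past_cylinders M X s"
  proof
    fix E assume "E \<in> natural_generators M X s"
    then obtain r B where E: "E = X r -` B \<inter> space M" "0 \<le> r" "r \<le> s" "B \<in> sets borel"
      unfolding natural_generators_def by blast
    have "E = {\<omega>\<in>space M. \<forall>r'\<in>{r}. X r' \<omega> \<in> (\<lambda>_. B) r'}" using E by auto
    moreover have "finite {r} \<and> {r} \<subseteq> {0..s} \<and> (\<forall>r'\<in>{r}. (\<lambda>_. B) r' \<in> sets borel)"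
      using E by auto
    ultimately show "E \<in> past_cylinders M X s"
      unfolding past_cylinders_def by (intro CollectI exI[of _ "{r}"] exI[of _ "\<lambda>_. B"]) (rule conjI)
  qed
qed

lemma partial_sums_condition_sets:
  fixes k :: "'r \<Rightarrow> nat"
  assumes R: "finite R" and k: "\<And>r. r \<in> R \<Longrightarrow> k r \<le> N" and B: "\<And>r. r \<in> R \<Longrightarrow> B r \<in> sets borel"
  shows "{f \<in> space (PiM {..<N} (\<lambda>_. borel)). \<forall>r\<in>R. (\<Sum>i<k r. f i) \<in> B r}
           \<in> sets (PiM {..<N} (\<lambda>_. borel::real measure))"
proof (rule sets.sets_Collect_finite_All[OF _ R])
  fix r assume r: "r \<in> R"
  have "(\<lambda>f. \<Sum>i<k r. f i) \<in> borel_measurable (PiM {..<N} (\<lambda>_. borel::real measure))"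
    using k[OF r] by (intro borel_measurable_sum measurable_component_singleton) auto
  then show "{f \<in> space (PiM {..<N} (\<lambda>_. borel)). (\<Sum>i<k r. f i) \<in> B r} \<in> sets (PiM {..<N} (\<lambda>_. borel))"
    using B[OF r] by measurable
qed

text \<open>A past cylinder is independent of the increment \<open>X t - X s\<close>: up to a null set it is
  determined by the increments on a grid of \<open>[0, s]\<close>, which are independent of \<open>X t - X s\<close>.\<close>
lemma levy_cylinder_indep:
  assumes L: "levy_process M X \<psi>" and st: "0 \<le> s" "s \<le> t"
    and R: "finite R" "R \<subseteq> {0..s}" and B: "\<And>r. r \<in> R \<Longrightarrow> B r \<in> sets borel"
    and A0: "A0 \<in> sets borel"
  defines "E \<equiv> {\<omega>\<in>space M. \<forall>r\<in>R. X r \<omega> \<in> B r}"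
    and "A \<equiv> (\<lambda>\<omega>. X t \<omega> - X s \<omega>) -` A0 \<inter> space M"
  shows "measure M (E \<inter> A) = measure M E * measure M A"
proof -
  interpret prob_space M using levy_processD(1)[OF L] .
  note Xm = levy_processD(2)[OF L]
  obtain N tt idx where tt0: "tt 0 = 0" and ttm: "\<And>i. tt i \<le> tt (Suc i)"
    and ttN: "tt N = s" "tt (Suc N) = t" and idx: "\<And>r. r \<in> R \<Longrightarrow> idx r < N \<and> tt (idx r) = r"
    using finite_time_grid[OF R st] by blast
  have tt_nonneg: "0 \<le> tt j" for j
    by (induction j) (use tt0 ttm order_trans in auto)
  define I where "I i \<omega> = X (tt (Suc i)) \<omega> - X (tt i) \<omega>" for i \<omega>
  have I_meas: "I i \<in> borel_measurable M" for i unfolding I_def using Xm tt_nonneg by measurable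
  have init_meas: "(\<lambda>\<omega>. \<lambda>i\<in>{..<N}. I i \<omega>) \<in> measurable M (PiM {..<N} (\<lambda>_. borel))"
    by (intro measurable_restrict I_meas)
  have ind: "indep_vars (\<lambda>_. borel) I {..<Suc N}"
    unfolding I_def by (rule levy_processD(4)[OF L]) (use tt0 ttm in auto)
  text \<open>On \<open>{X 0 = 0}\<close>, the event \<open>E\<close> is a condition on the partial sums of the increments.\<close>
  define F where "F = {f\<in>space (PiM {..<N} (\<lambda>_. borel)). \<forall>r\<in>R. (\<Sum>i<idx r. f i) \<in> B r}"
  define E' where "E' = (\<lambda>\<omega>. \<lambda>i\<in>{..<N}. I i \<omega>) -` F \<inter> space M"
  have F: "F \<in> sets (PiM {..<N} (\<lambda>_. borel))"
    unfolding F_def by (rule partial_sums_condition_sets[OF R(1)]) (use idx B in \<open>auto intro: less_imp_le\<close>)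
  have AE_eq: "AE \<omega> in M. (\<omega> \<in> E) = (\<omega> \<in> E')"
    using levy_processD(3)[OF L]
  proof eventually_elim
    case (elim \<omega>)
    have "X r \<omega> = (\<Sum>i<idx r. I i \<omega>)" if "r \<in> R" for r
      using sum_lessThan_telescope[of "\<lambda>i. X (tt i) \<omega>" "idx r"] idx[OF that] tt0 elim
      by (simp add: I_def)
    moreover have "(\<Sum>i<idx r. (\<lambda>i\<in>{..<N}. I i \<omega>) i) = (\<Sum>i<idx r. I i \<omega>)" if "r \<in> R" for r
      using idx[OF that] by (intro sum.cong) auto
    ultimately show ?case
      using measurable_space[OF init_meas]
      by (auto simp: E_def E'_def F_def)
  qed
  have E'_A: "prob (E' \<inter> A) = prob E' * prob A"
  proof -
    have "I N = (\<lambda>\<omega>. X t \<omega> - X s \<omega>)" by (simp add: fun_eq_iff I_def ttN)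
    then have "A = I N -` A0 \<inter> space M" by (simp add: A_def)
    then have "E' \<inter> A = (\<lambda>\<omega>. \<lambda>i\<in>{..<N}. I i \<omega>) -` F \<inter> (I N -` A0 \<inter> space M)"
      by (auto simp: E'_def)
    then show ?thesis using indep_vars_init_last[OF ind F A0] \<open>A = I N -` A0 \<inter> space M\<close>
      by (simp add: E'_def)
  qed
  have E_ev: "E \<in> events" unfolding E_def
    by (rule sets.sets_Collect_finite_All[OF _ R(1)]) (use Xm R B in \<open>auto intro: measurable_sets_Collect\<close>)
  have E'_ev: "E' \<in> events" unfolding E'_def
    using measurable_sets[OF init_meas F] by simp
  have "X t \<in> borel_measurable M" "X s \<in> borel_measurable M" using Xm st by auto
  then have A_ev: "A \<in> events" unfolding A_def using A0 by measurable
  have "prob (E \<inter> A) = prob (E' \<inter> A)" by (rule measure_eq_AE) (use AE_eq E_ev E'_ev A_ev in auto)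
  moreover have "prob E = prob E'" by (rule measure_eq_AE) (use AE_eq E_ev E'_ev in auto)
  ultimately show ?thesis using E'_A by simp
qed

text \<open>Every variable measurable for the natural filtration at time \<open>s\<close> is independent of
  \<open>X t - X s\<close>: the past cylinders form an intersection-stable generator of the natural
  sigma-algebra, on which independence holds by the previous lemma.\<close>
lemma levy_indep_past:
  assumes L: "levy_process M X \<psi>" and st: "0 \<le> s" "s \<le> t"
    and Z: "Z \<in> borel_measurable (natural_sigma M X s)"
  shows "prob_space.indep_var M borel Z borel (\<lambda>\<omega>. X t \<omega> - X s \<omega>)"
proof -
  interpret prob_space M using levy_processD(1)[OF L] .
  note Xm = levy_processD(2)[OF L]
  define P where "P = past_cylinders M X s"
  define G where "G = {(\<lambda>\<omega>. X t \<omega> - X s \<omega>) -` A \<inter> space M | A. A \<in> sets borel}"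
  have "X t \<in> borel_measurable M" "X s \<in> borel_measurable M" using Xm st by auto
  then have D: "(\<lambda>\<omega>. X t \<omega> - X s \<omega>) \<in> borel_measurable M" by measurable
  have G_Int: "Int_stable G"
    unfolding Int_stable_def G_def
  proof safe
    fix C D :: "real set" assume "C \<in> sets borel" "D \<in> sets borel"
    then show "\<exists>F. (\<lambda>\<omega>. X t \<omega> - X s \<omega>) -` C \<inter> space M \<inter> ((\<lambda>\<omega>. X t \<omega> - X s \<omega>) -` D \<inter> space M)
         = (\<lambda>\<omega>. X t \<omega> - X s \<omega>) -` F \<inter> space M \<and> F \<in> sets borel"
      by (intro exI[of _ "C \<inter> D"]) auto
  qed
  have "indep_set P G"
    unfolding indep_sets2_eq
  proof (intro conjI ballI)
    show "P \<subseteq> events" unfolding P_def by (rule past_cylinders_events[OF Xm])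
    show "G \<subseteq> events" unfolding G_def using D by auto
    fix a b assume "a \<in> P" "b \<in> G"
    then obtain R B A0 where a: "a = {\<omega>\<in>space M. \<forall>r\<in>R. X r \<omega> \<in> B r}" and R: "finite R" "R \<subseteq> {0..s}"
      and B: "\<forall>r\<in>R. B r \<in> sets borel" and b: "b = (\<lambda>\<omega>. X t \<omega> - X s \<omega>) -` A0 \<inter> space M"
      and A0: "A0 \<in> sets borel" unfolding P_def past_cylinders_def G_def by blast
    show "prob (a \<inter> b) = prob a * prob b" unfolding a b
      by (rule levy_cylinder_indep[OF L st R _ A0]) (use B in auto)
  qed
  from indep_set_sigma_sets[OF this _ G_Int]
  have ind: "indep_set (sigma_sets (space M) P) (sigma_sets (space M) G)"
    unfolding P_def by (simp add: past_cylinders_Int_stable)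
  have Z_sets: "sigma_sets (space M) {Z -` A \<inter> space M | A. A \<in> sets borel} \<subseteq> sets (natural_sigma M X s)"
  proof (rule sets.sigma_sets_subset'[where M="natural_sigma M X s"])
    show "{Z -` A \<inter> space M | A. A \<in> sets borel} \<subseteq> sets (natural_sigma M X s)"
      using Z by (auto dest: measurable_sets)
  qed (use sets.top[of "natural_sigma M X s"] in simp)
  have ZM: "Z \<in> borel_measurable M" by (rule natural_measurable_imp_measurable[OF Xm Z])
  show ?thesis
    unfolding indep_var_eq
  proof (intro conjI ZM D)
    show "indep_set (sigma_sets (space M) {Z -` A \<inter> space M |A. A \<in> sets borel})
        (sigma_sets (space M) {(\<lambda>\<omega>. X t \<omega> - X s \<omega>) -` A \<inter> space M |A. A \<in> sets borel})"
      using ind unfolding indep_set_def G_def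
      by (rule indep_sets_mono_sets)
         (use Z_sets natural_sigma_past_cylinders[of M X s] in \<open>auto simp: P_def split: bool.split\<close>)
  qed
qed

section \<open>Second moments of simple stochastic integrals\<close>

lemma bounded_multiple_second_moment:
  fixes G D :: "'a \<Rightarrow> real"
  assumes G: "G \<in> borel_measurable M" "\<And>\<omega>. \<omega> \<in> space M \<Longrightarrow> \<bar>G \<omega>\<bar> \<le> 1"
    and D: "D \<in> borel_measurable M" "integrable M (\<lambda>\<omega>. (D \<omega>)^2)"
  shows "integrable M (\<lambda>\<omega>. (G \<omega> * D \<omega>)^2)" and "(\<integral>\<omega>. (G \<omega> * D \<omega>)^2 \<partial>M) \<le> (\<integral>\<omega>. (D \<omega>)^2 \<partial>M)"
proof -
  have le: "(G \<omega> * D \<omega>)^2 \<le> (D \<omega>)^2" if "\<omega> \<in> space M" for \<omega>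
  proof -
    have "(G \<omega>)^2 * (D \<omega>)^2 \<le> 1 * (D \<omega>)^2"
      using G(2)[OF that] by (intro mult_right_mono) (auto simp: abs_square_le_1)
    then show ?thesis by (simp add: power_mult_distrib)
  qed
  show int: "integrable M (\<lambda>\<omega>. (G \<omega> * D \<omega>)^2)"
    by (rule Bochner_Integration.integrable_bound[OF D(2)]) (use le G D in \<open>auto intro!: AE_I2\<close>)
  show "(\<integral>\<omega>. (G \<omega> * D \<omega>)^2 \<partial>M) \<le> (\<integral>\<omega>. (D \<omega>)^2 \<partial>M)"
    by (rule integral_mono_AE[OF int D(2)]) (use le in \<open>auto intro!: AE_I2\<close>)
qed

text \<open>Orthogonality step: adding to \<open>S\<close> a \<open>[-1, 1]\<close>-valued multiple \<open>G\<close> of a centred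
  variable whose independence from \<open>S G\<close> is known raises the second moment by at most
  \<open>E \<Delta>\<^sup>2\<close>, because the cross term has expectation zero.\<close>
lemma (in prob_space) second_moment_add_indep:
  fixes S G \<Delta> :: "'a \<Rightarrow> real"
  assumes S: "S \<in> borel_measurable M" "integrable M (\<lambda>\<omega>. (S \<omega>)^2)"
    and G: "G \<in> borel_measurable M" "\<And>\<omega>. \<omega> \<in> space M \<Longrightarrow> \<bar>G \<omega>\<bar> \<le> 1"
    and \<Delta>: "\<Delta> \<in> borel_measurable M" "integrable M (\<lambda>\<omega>. (\<Delta> \<omega>)^2)"
    and ind: "indep_var borel (\<lambda>\<omega>. S \<omega> * G \<omega>) borel \<Delta>"
  defines "T \<equiv> \<lambda>\<omega>. S \<omega> + G \<omega> * (\<Delta> \<omega> - expectation \<Delta>)"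
  shows "integrable M (\<lambda>\<omega>. (T \<omega>)^2)"
    and "(\<integral>\<omega>. (T \<omega>)^2 \<partial>M) \<le> (\<integral>\<omega>. (S \<omega>)^2 \<partial>M) + (\<integral>\<omega>. (\<Delta> \<omega>)^2 \<partial>M)"
proof -
  define Q where "Q \<omega> = S \<omega> * G \<omega>" for \<omega>
  define Dc where "Dc \<omega> = \<Delta> \<omega> - expectation \<Delta>" for \<omega>
  define W where "W \<omega> = G \<omega> * Dc \<omega>" for \<omega>
  have \<Delta>I: "integrable M \<Delta>" by (rule square_integrable_imp_integrable[OF \<Delta>])
  have DcI: "integrable M Dc" unfolding Dc_def using \<Delta>I by auto
  have Dc2I: "integrable M (\<lambda>\<omega>. (Dc \<omega>)^2)"
    unfolding Dc_def power2_diff using \<Delta>I \<Delta>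
    by (intro Bochner_Integration.integrable_diff Bochner_Integration.integrable_add) auto
  have EDc: "expectation Dc = 0" unfolding Dc_def using \<Delta>I by (simp add: prob_space)
  have EDc2: "(\<integral>\<omega>. (Dc \<omega>)^2 \<partial>M) \<le> (\<integral>\<omega>. (\<Delta> \<omega>)^2 \<partial>M)"
    using variance_eq[OF \<Delta>I \<Delta>(2)] unfolding Dc_def by simp
  have QI: "integrable M Q" unfolding Q_def
    by (rule Bochner_Integration.integrable_bound[OF square_integrable_imp_integrable[OF S]])
       (use G S in \<open>auto simp: abs_mult intro!: AE_I2 mult_left_le\<close>)
  have ind': "indep_var borel Q borel Dc"
    using indep_var_compose[OF ind, of "\<lambda>x. x" borel "\<lambda>x. x - expectation \<Delta>" borel]
    unfolding Dc_def Q_def by (simp add: comp_def)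
  have QDI: "integrable M (\<lambda>\<omega>. Q \<omega> * Dc \<omega>)" by (rule indep_var_integrable[OF ind' QI DcI])
  have cross: "(\<integral>\<omega>. Q \<omega> * Dc \<omega> \<partial>M) = 0"
    using indep_var_lebesgue_integral[OF ind' QI DcI] EDc by simp
  have Dc_meas: "Dc \<in> borel_measurable M" unfolding Dc_def using \<Delta> by auto
  note W2 = bounded_multiple_second_moment[OF G Dc_meas Dc2I, folded W_def]
  have sq: "(T \<omega>)^2 = (S \<omega>)^2 + 2 * (Q \<omega> * Dc \<omega>) + (W \<omega>)^2" for \<omega>
    unfolding T_def Q_def W_def Dc_def by (simp add: power2_eq_square algebra_simps)
  show "integrable M (\<lambda>\<omega>. (T \<omega>)^2)" unfolding sq using S QDI W2(1) by auto
  have "(\<integral>\<omega>. (T \<omega>)^2 \<partial>M) = (\<integral>\<omega>. (S \<omega>)^2 \<partial>M) + 2 * (\<integral>\<omega>. Q \<omega> * Dc \<omega> \<partial>M) + (\<integral>\<omega>. (W \<omega>)^2 \<partial>M)"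
    unfolding sq using S QDI W2(1) by simp
  then show "(\<integral>\<omega>. (T \<omega>)^2 \<partial>M) \<le> (\<integral>\<omega>. (S \<omega>)^2 \<partial>M) + (\<integral>\<omega>. (\<Delta> \<omega>)^2 \<partial>M)"
    using cross W2(2) EDc2 by linarith
qed

lemma grid_mono:
  fixes tt :: "nat \<Rightarrow> real"
  assumes "\<forall>i\<le>m. tt i \<le> tt (Suc i)" "i \<le> k" "k \<le> Suc m"
  shows "tt i \<le> tt k"
  using assms(2,3)
proof (induction k)
  case (Suc k)
  then show ?case using assms(1) by (cases "i = Suc k") (auto intro: order_trans[of _ "tt k"])
qed simp

text \<open>On a grid of \<open>[0, t]\<close> with \<open>t \<le> 1\<close> the steps \<open>\<delta>\<^sub>i = tt (i + 1) - tt i\<close> lie in \<open>[0, 1]\<close> and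
  sum to at most 1, so the per-step bounds \<open>\<delta>\<^sub>i C\<close> and \<open>\<delta>\<^sub>i V + (\<delta>\<^sub>i C)\<^sup>2\<close> add up to at most
  those of a unit step.\<close>
lemma grid_step_sums:
  fixes tt :: "nat \<Rightarrow> real"
  assumes tt0: "tt 0 = 0" and ttm1: "tt (Suc m) = t" and t: "t \<le> 1"
    and ttm: "\<forall>i\<le>m. tt i \<le> tt (Suc i)" and V: "0 \<le> V" and C: "0 \<le> C"
  shows "(\<Sum>i\<in>{1..m}. (tt (Suc i) - tt i) * C) \<le> C"
    and "(\<Sum>i\<in>{1..m}. (tt (Suc i) - tt i) * V + ((tt (Suc i) - tt i) * C)^2) \<le> V + C^2"
proof -
  define \<delta> where "\<delta> i = tt (Suc i) - tt i" for i
  have tle: "\<And>i k. i \<le> k \<Longrightarrow> k \<le> Suc m \<Longrightarrow> tt i \<le> tt k" using grid_mono[OF ttm] by blast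
  have \<delta>: "0 \<le> \<delta> i" "\<delta> i \<le> 1" if "i \<le> m" for i
    using tle[of i "Suc i"] tle[of "Suc i" "Suc m"] tle[of 0 i] tt0 ttm1 t that by (auto simp: \<delta>_def)
  have sum1: "(\<Sum>i\<in>{1..m}. \<delta> i) \<le> 1"
  proof -
    have "(\<Sum>i\<in>{1..m}. \<delta> i) = tt (Suc m) - tt 1" unfolding \<delta>_def by (rule sum_Suc_diff) simp
    then show ?thesis using ttm1 t tle[of 0 1] tt0 by simp
  qed
  have "(\<Sum>i\<in>{1..m}. \<delta> i * C) = (\<Sum>i\<in>{1..m}. \<delta> i) * C" by (simp add: sum_distrib_right)
  also have "\<dots> \<le> 1 * C" using sum1 C by (intro mult_right_mono) auto
  finally show "(\<Sum>i\<in>{1..m}. (tt (Suc i) - tt i) * C) \<le> C" by (simp add: \<delta>_def)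
  have "(\<Sum>i\<in>{1..m}. \<delta> i * V + (\<delta> i * C)^2) \<le> (\<Sum>i\<in>{1..m}. \<delta> i * (V + C^2))"
  proof (rule sum_mono)
    fix i assume i: "i \<in> {1..m}"
    have "(\<delta> i)^2 * C^2 \<le> \<delta> i * C^2"
      using \<delta>[of i] i by (intro mult_right_mono) (auto simp: power2_eq_square mult_left_le_one_le)
    then show "\<delta> i * V + (\<delta> i * C)^2 \<le> \<delta> i * (V + C^2)" by (simp add: power_mult_distrib distrib_left)
  qed
  also have "\<dots> = (\<Sum>i\<in>{1..m}. \<delta> i) * (V + C^2)" by (simp add: sum_distrib_right)
  also have "\<dots> \<le> 1 * (V + C^2)" using sum1 V by (intro mult_right_mono) auto
  finally show "(\<Sum>i\<in>{1..m}. (tt (Suc i) - tt i) * V + ((tt (Suc i) - tt i) * C)^2) \<le> V + C^2"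
    by (simp add: \<delta>_def)
qed

lemma weighted_increments_adapted:
  fixes tt :: "nat \<Rightarrow> real"
  assumes tt0: "tt 0 = 0" and ttm: "\<forall>i\<le>m. tt i \<le> tt (Suc i)"
    and Gm: "\<And>i. i \<le> m \<Longrightarrow> G i \<in> borel_measurable (natural_sigma M X (tt i))" and j: "j \<le> m"
  shows "(\<lambda>\<omega>. \<Sum>i\<in>{1..j}. G i \<omega> * (X (tt (Suc i)) \<omega> - X (tt i) \<omega> - c i))
           \<in> borel_measurable (natural_sigma M X (tt (Suc j)))"
proof (intro borel_measurable_sum borel_measurable_times borel_measurable_diff borel_measurable_const)
  have tle: "\<And>i k. i \<le> k \<Longrightarrow> k \<le> Suc m \<Longrightarrow> tt i \<le> tt k" using grid_mono[OF ttm] by blast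
  have ttnn: "\<And>i. i \<le> Suc m \<Longrightarrow> 0 \<le> tt i" using tle[of 0] tt0 by auto
  fix i assume i: "i \<in> {1..j}"
  show "G i \<in> borel_measurable (natural_sigma M X (tt (Suc j)))"
    by (rule measurable_natural_sigma_mono[OF Gm]) (use i j in \<open>auto intro!: tle\<close>)
  show "X (tt (Suc i)) \<in> borel_measurable (natural_sigma M X (tt (Suc j)))"
    and "X (tt i) \<in> borel_measurable (natural_sigma M X (tt (Suc j)))"
    by (rule X_measurable_natural_sigma; use i j in \<open>auto intro!: ttnn tle\<close>)+
qed

text \<open>Second-moment (Ito-isometry type) bound for the centred part of a simple integral of a
  Levy process: the increments, centred and weighted by predictable coefficients in \<open>[-1, 1]\<close>,
  are orthogonal, so their sum has second moment at most the sum of the individual bounds.\<close>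
lemma levy_centred_simple_integral_L2:
  fixes M :: "'a measure" and X :: "real \<Rightarrow> 'a \<Rightarrow> real"
  assumes L: "levy_process M X \<psi>" and \<psi>: "exponent_bounded V C \<psi>"
    and tt0: "tt 0 = 0" and ttm: "\<forall>i\<le>m. tt i \<le> tt (Suc i)"
    and Gm: "\<And>i. i \<le> m \<Longrightarrow> G i \<in> borel_measurable (natural_sigma M X (tt i))"
    and Gb: "\<And>i \<omega>. i \<le> m \<Longrightarrow> \<omega> \<in> space M \<Longrightarrow> \<bar>G i \<omega>\<bar> \<le> 1"
  defines "c i \<equiv> \<integral>\<omega>. X (tt (Suc i)) \<omega> - X (tt i) \<omega> \<partial>M"
  defines "S j \<omega> \<equiv> \<Sum>i\<in>{1..j}. G i \<omega> * (X (tt (Suc i)) \<omega> - X (tt i) \<omega> - c i)"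
  assumes j: "j \<le> m"
  shows "integrable M (\<lambda>\<omega>. (S j \<omega>)^2)"
    and "(\<integral>\<omega>. (S j \<omega>)^2 \<partial>M) \<le> (\<Sum>i\<in>{1..j}. (tt (Suc i) - tt i)*V + ((tt (Suc i) - tt i)*C)^2)"
proof -
  interpret prob_space M using levy_processD(1)[OF L] .
  note Xm = levy_processD(2)[OF L]
  have tle: "\<And>i k. i \<le> k \<Longrightarrow> k \<le> Suc m \<Longrightarrow> tt i \<le> tt k" using grid_mono[OF ttm] by blast
  have ttnn: "\<And>i. i \<le> Suc m \<Longrightarrow> 0 \<le> tt i" using tle[of 0] tt0 by auto
  have S_nat: "S j \<in> borel_measurable (natural_sigma M X (tt (Suc j)))" if "j \<le> m" for j
    unfolding S_def by (rule weighted_increments_adapted[OF tt0 ttm Gm that])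
  have to_M: "f \<in> borel_measurable M" if "f \<in> borel_measurable (natural_sigma M X s)" for f s
    by (rule natural_measurable_imp_measurable[OF Xm that])
  define bound where
    "bound j = (\<Sum>i\<in>{1..j}. (tt (Suc i) - tt i)*V + ((tt (Suc i) - tt i)*C)^2)" for j
  have "integrable M (\<lambda>\<omega>. (S j \<omega>)^2) \<and> (\<integral>\<omega>. (S j \<omega>)^2 \<partial>M) \<le> bound j" using j
  proof (induction j)
    case 0
    show ?case by (simp add: S_def bound_def)
  next
    case (Suc j)
    define k where "k = Suc j"
    have k: "k \<le> m" "1 \<le> k" using Suc k_def by auto
    have tk: "0 \<le> tt k" "tt k \<le> tt (Suc k)" using ttnn tle k by auto
    define \<Delta> where "\<Delta> \<omega> = X (tt (Suc k)) \<omega> - X (tt k) \<omega>" for \<omega>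
    have \<Delta>: "\<Delta> \<in> borel_measurable M" "integrable M (\<lambda>\<omega>. (\<Delta> \<omega>)^2)"
      "(\<integral>\<omega>. (\<Delta> \<omega>)^2 \<partial>M) \<le> (tt (Suc k) - tt k)*V + ((tt (Suc k) - tt k)*C)^2"
      using Xm tk levy_increment_moments[OF L \<psi> tk] unfolding \<Delta>_def by auto
    have SG_nat: "(\<lambda>\<omega>. S j \<omega> * G k \<omega>) \<in> borel_measurable (natural_sigma M X (tt k))"
      using S_nat[of j] Gm[OF k(1)] Suc k_def by (intro borel_measurable_times) auto
    have ind: "indep_var borel (\<lambda>\<omega>. S j \<omega> * G k \<omega>) borel \<Delta>"
      unfolding \<Delta>_def by (rule levy_indep_past[OF L tk SG_nat])
    have IH: "integrable M (\<lambda>\<omega>. (S j \<omega>)^2)" "(\<integral>\<omega>. (S j \<omega>)^2 \<partial>M) \<le> bound j"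
      using Suc by auto
    have S_step: "S k = (\<lambda>\<omega>. S j \<omega> + G k \<omega> * (\<Delta> \<omega> - expectation \<Delta>))"
      unfolding S_def k_def \<Delta>_def c_def by (simp add: fun_eq_iff)
    have S_j: "S j \<in> borel_measurable M" using Suc by (intro to_M[OF S_nat]) simp
    note step = second_moment_add_indep[OF S_j IH(1) to_M[OF Gm[OF k(1)]] Gb[OF k(1)] \<Delta>(1,2) ind]
    have "bound k = bound j + ((tt (Suc k) - tt k)*V + ((tt (Suc k) - tt k)*C)^2)"
      by (simp add: bound_def k_def)
    then show ?case using step IH(2) \<Delta>(3) S_step k_def by simp
  qed
  then show "integrable M (\<lambda>\<omega>. (S j \<omega>)^2)"
    and "(\<integral>\<omega>. (S j \<omega>)^2 \<partial>M) \<le> (\<Sum>i\<in>{1..j}. (tt (Suc i) - tt i)*V + ((tt (Suc i) - tt i)*C)^2)"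
    unfolding bound_def by auto
qed

text \<open>A simple integral may be written with coefficients that are everywhere bounded by 1 and
  measurable for the (uncompleted) natural filtration, at the price of an almost sure equality:
  replace each coefficient by its natural version clipped to \<open>[-1, 1]\<close>.\<close>
lemma simple_integral_natural_version:
  assumes Y: "Y \<in> simple_integrals M X t"
  obtains m tt G where "tt 0 = 0" "tt (Suc m) = t" "\<forall>i\<le>m. tt i \<le> tt (Suc i)"
    "\<And>i. i \<le> m \<Longrightarrow> G i \<in> borel_measurable (natural_sigma M X (tt i))"
    "\<And>i \<omega>. \<bar>G i \<omega>\<bar> \<le> 1"
    "AE \<omega> in M. Y \<omega> = G 0 \<omega> * (X t \<omega> - X 0 \<omega>)
                    + (\<Sum>i\<in>{1..m}. G i \<omega> * (X (tt (Suc i)) \<omega> - X (tt i) \<omega>))"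
proof -
  from Y obtain m tt H where Y_def: "Y = (\<lambda>\<omega>. H 0 \<omega> * (X t \<omega> - X 0 \<omega>)
            + (\<Sum>i\<in>{1..m}. H i \<omega> * (X (tt (Suc i)) \<omega> - X (tt i) \<omega>)))"
    and grid: "tt 0 = 0" "tt (Suc m) = t" "\<forall>i\<le>m. tt i \<le> tt (Suc i)"
    and H: "\<forall>i\<le>m. completed_natural_measurable M X (tt i) (H i) \<and> (\<forall>\<omega>\<in>space M. \<bar>H i \<omega>\<bar> \<le> 1)"
    unfolding simple_integrals_def by blast
  have "\<forall>i\<in>{..m}. \<exists>G. G \<in> borel_measurable (natural_sigma M X (tt i)) \<and> (AE \<omega> in M. H i \<omega> = G \<omega>)"
    using H unfolding completed_natural_measurable_def by auto
  then obtain G where G: "\<And>i. i \<le> m \<Longrightarrow> G i \<in> borel_measurable (natural_sigma M X (tt i))"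
    "\<And>i. i \<le> m \<Longrightarrow> AE \<omega> in M. H i \<omega> = G i \<omega>" by (metis atMost_iff)
  define Gc where "Gc i \<omega> = max (-1) (min 1 (G i \<omega>))" for i \<omega>
  have "Gc i \<in> borel_measurable (natural_sigma M X (tt i))" if "i \<le> m" for i
    unfolding Gc_def using G(1)[OF that] by measurable
  moreover have "\<bar>Gc i \<omega>\<bar> \<le> 1" for i \<omega> unfolding Gc_def by auto
  moreover have "AE \<omega> in M. H i \<omega> = Gc i \<omega>" if "i \<le> m" for i
    using G(2)[OF that]
  proof (rule AE_mp, intro AE_I2 impI)
    fix \<omega> assume "\<omega> \<in> space M" "H i \<omega> = G i \<omega>"
    moreover have "\<bar>H i \<omega>\<bar> \<le> 1" using H that \<open>\<omega> \<in> space M\<close> by auto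
    ultimately show "H i \<omega> = Gc i \<omega>" unfolding Gc_def by (auto simp: abs_le_iff max_def min_def)
  qed
  then have "AE \<omega> in M. \<forall>i\<in>{..m}. H i \<omega> = Gc i \<omega>" by (subst AE_finite_all) auto
  then have "AE \<omega> in M. Y \<omega> = Gc 0 \<omega> * (X t \<omega> - X 0 \<omega>)
                    + (\<Sum>i\<in>{1..m}. Gc i \<omega> * (X (tt (Suc i)) \<omega> - X (tt i) \<omega>))"
    by eventually_elim (auto simp: Y_def)
  ultimately show ?thesis using that grid by blast
qed

lemma chebyshev_second_moment:
  assumes "prob_space M" and Z: "Z \<in> borel_measurable M" "integrable M (\<lambda>\<omega>. (Z \<omega>)^2)"
    and ZB: "(\<integral>\<omega>. (Z \<omega>)^2 \<partial>M) \<le> B" and a: "0 < a"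
  shows "measure M {\<omega>\<in>space M. a \<le> \<bar>Z \<omega>\<bar>} \<le> B / a^2"
proof -
  have "{\<omega>\<in>space M. a \<le> \<bar>Z \<omega>\<bar>} = {\<omega>\<in>space M. a^2 \<le> (Z \<omega>)^2}"
    using a by (auto simp: abs_le_square_iff[symmetric] abs_of_pos)
  also have "measure M \<dots> \<le> (\<integral>\<omega>. (Z \<omega>)^2 \<partial>M) / a^2"
    by (rule integral_Markov_inequality_measure[OF Z(2), where A="space M"]) (use a Z in auto)
  also have "\<dots> \<le> B / a^2" using ZB a by (intro divide_right_mono) auto
  finally show ?thesis .
qed

lemma measure_completion_AE_eq:
  assumes "AE x in M. (x \<in> A) = (x \<in> A')" "A' \<in> sets M" "A \<subseteq> space M"
  shows "measure (completion M) A = measure M A'"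
proof -
  from assms(1) obtain N where N: "N \<in> null_sets M" "{x\<in>space M. \<not> ((x \<in> A) = (x \<in> A'))} \<subseteq> N"
    by (auto elim!: AE_E)
  have "A' \<subseteq> space M" using assms(2) sets.sets_into_space by blast
  then have "A = (A' - N) \<union> (A \<inter> N)" using N assms(3) by blast
  then have "A \<in> sets (completion M)"
    by (rule sets_completionI[where N'=N]) (use N assms(2) in auto)
  then have "measure (completion M) A = measure (completion M) A'"
    by (intro measure_eq_AE[OF AE_completion[OF assms(1)]]) (use assms(2) in auto)
  then show ?thesis using assms(2) by simp
qed

text \<open>Tail bound for \<open>Y = A + B + R\<close> (almost surely) with \<open>A, B\<close> of second moment at most
  \<open>W\<close> and \<open>|R| \<le> C\<close>: if \<open>|Y| > K\<close> then \<open>|A|\<close> or \<open>|B|\<close> is at least \<open>(K - C)/2\<close>.\<close>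
lemma tail_bound_two_L2_one_bounded:
  assumes P: "prob_space M"
    and A: "A \<in> borel_measurable M" "integrable M (\<lambda>\<omega>. (A \<omega>)^2)" and EA: "(\<integral>\<omega>. (A \<omega>)^2 \<partial>M) \<le> W"
    and B: "B \<in> borel_measurable M" "integrable M (\<lambda>\<omega>. (B \<omega>)^2)" and EB: "(\<integral>\<omega>. (B \<omega>)^2 \<partial>M) \<le> W"
    and R: "R \<in> borel_measurable M" "\<And>\<omega>. \<bar>R \<omega>\<bar> \<le> C"
    and Y: "AE \<omega> in M. Y \<omega> = A \<omega> + B \<omega> + R \<omega>" and K: "C < K"
  shows "measure (completion M) {\<omega>\<in>space M. \<bar>Y \<omega>\<bar> > K} \<le> 8 * W / (K - C)^2"
proof -
  interpret prob_space M by fact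
  define a where "a = (K - C) / 2"
  have a: "0 < a" using K a_def by simp
  have split: "{\<omega>\<in>space M. \<bar>A \<omega> + B \<omega> + R \<omega>\<bar> > K} \<subseteq> {\<omega>\<in>space M. a \<le> \<bar>A \<omega>\<bar>} \<union> {\<omega>\<in>space M. a \<le> \<bar>B \<omega>\<bar>}"
  proof safe
    fix \<omega> assume "K < \<bar>A \<omega> + B \<omega> + R \<omega>\<bar>" "\<not> a \<le> \<bar>B \<omega>\<bar>"
    moreover have "\<bar>A \<omega> + B \<omega> + R \<omega>\<bar> \<le> \<bar>A \<omega>\<bar> + \<bar>B \<omega>\<bar> + \<bar>R \<omega>\<bar>" by arith
    ultimately show "a \<le> \<bar>A \<omega>\<bar>" using R(2)[of \<omega>] unfolding a_def by argo
  qed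
  have "measure (completion M) {\<omega>\<in>space M. \<bar>Y \<omega>\<bar> > K} = prob {\<omega>\<in>space M. \<bar>A \<omega> + B \<omega> + R \<omega>\<bar> > K}"
    by (rule measure_completion_AE_eq) (use Y A B R in auto)
  also have "\<dots> \<le> prob ({\<omega>\<in>space M. a \<le> \<bar>A \<omega>\<bar>} \<union> {\<omega>\<in>space M. a \<le> \<bar>B \<omega>\<bar>})"
    by (rule finite_measure_mono[OF split]) (use A B in measurable)
  also have "\<dots> \<le> prob {\<omega>\<in>space M. a \<le> \<bar>A \<omega>\<bar>} + prob {\<omega>\<in>space M. a \<le> \<bar>B \<omega>\<bar>}"
    by (rule measure_Un_le) (use A B in measurable)
  also have "\<dots> \<le> W / a^2 + W / a^2"
    by (intro add_mono chebyshev_second_moment[OF P] A B EA EB a)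
  also have "\<dots> = 8 * W / (K - C)^2" unfolding a_def by (simp add: field_simps power2_eq_square)
  finally show ?thesis .
qed

lemma levy_simple_integral_decomposition:
  fixes M :: "'a measure" and X :: "real \<Rightarrow> 'a \<Rightarrow> real"
  assumes L: "levy_process M X \<psi>" and \<psi>: "exponent_bounded V C \<psi>" and V: "0 \<le> V"
    and t: "0 < t" "t \<le> 1" and Y: "Y \<in> simple_integrals M X t"
  obtains A B R where "A \<in> borel_measurable M" "integrable M (\<lambda>\<omega>. (A \<omega>)^2)"
    "(\<integral>\<omega>. (A \<omega>)^2 \<partial>M) \<le> V + C^2"
    "B \<in> borel_measurable M" "integrable M (\<lambda>\<omega>. (B \<omega>)^2)" "(\<integral>\<omega>. (B \<omega>)^2 \<partial>M) \<le> V + C^2"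
    "R \<in> borel_measurable M" "\<And>\<omega>. \<bar>R \<omega>\<bar> \<le> C"
    "AE \<omega> in M. Y \<omega> = A \<omega> + B \<omega> + R \<omega>"
proof -
  interpret prob_space M using levy_processD(1)[OF L] .
  note Xm = levy_processD(2)[OF L]
  have C: "0 \<le> C" by (rule exponent_bounded_nonneg[OF \<psi>])
  obtain m tt G where tt0: "tt 0 = 0" and ttm1: "tt (Suc m) = t" and ttm: "\<forall>i\<le>m. tt i \<le> tt (Suc i)"
    and G_nat: "\<And>i. i \<le> m \<Longrightarrow> G i \<in> borel_measurable (natural_sigma M X (tt i))"
    and G_bound: "\<And>i \<omega>. \<bar>G i \<omega>\<bar> \<le> 1"
    and Y_eq: "AE \<omega> in M. Y \<omega> = G 0 \<omega> * (X t \<omega> - X 0 \<omega>)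
                    + (\<Sum>i\<in>{1..m}. G i \<omega> * (X (tt (Suc i)) \<omega> - X (tt i) \<omega>))"
    using simple_integral_natural_version[OF Y] by blast
  have tle: "\<And>i k. i \<le> k \<Longrightarrow> k \<le> Suc m \<Longrightarrow> tt i \<le> tt k" using grid_mono[OF ttm] by blast
  have ttnn: "\<And>i. i \<le> Suc m \<Longrightarrow> 0 \<le> tt i" using tle[of 0] tt0 by auto
  have G_meas: "G i \<in> borel_measurable M" if "i \<le> m" for i
    by (rule natural_measurable_imp_measurable[OF Xm G_nat[OF that]])
  note steps = grid_step_sums[OF tt0 ttm1 t(2) ttm V C]
  define A where "A \<omega> = G 0 \<omega> * (X t \<omega> - X 0 \<omega>)" for \<omega>
  have "X t \<in> borel_measurable M" "X 0 \<in> borel_measurable M" using Xm t by auto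
  then have inc_meas: "(\<lambda>\<omega>. X t \<omega> - X 0 \<omega>) \<in> borel_measurable M" by measurable
  note inc0 = levy_increment_moments[OF L \<psi> order_refl less_imp_le[OF t(1)]]
  note A2 = bounded_multiple_second_moment[OF G_meas[OF le0] G_bound inc_meas inc0(1), folded A_def]
  have A_meas: "A \<in> borel_measurable M" unfolding A_def using inc_meas G_meas[of 0] by measurable
  have "(\<integral>\<omega>. (A \<omega>)^2 \<partial>M) \<le> t*V + (t*C)^2" using A2(2) inc0(2) t by simp
  also have "\<dots> \<le> V + C^2"
    using t V C by (intro add_mono) (auto simp: mult_left_le_one_le power_mult_distrib power_le_one)
  finally have EA: "(\<integral>\<omega>. (A \<omega>)^2 \<partial>M) \<le> V + C^2" .
  define c where "c i = (\<integral>\<omega>. X (tt (Suc i)) \<omega> - X (tt i) \<omega> \<partial>M)" for i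
  define B where "B \<omega> = (\<Sum>i\<in>{1..m}. G i \<omega> * (X (tt (Suc i)) \<omega> - X (tt i) \<omega> - c i))" for \<omega>
  note L2 = levy_centred_simple_integral_L2[OF L \<psi> tt0 ttm G_nat G_bound order_refl, folded c_def]
  have B2: "integrable M (\<lambda>\<omega>. (B \<omega>)^2)" using L2(1) by (simp add: B_def)
  have EB: "(\<integral>\<omega>. (B \<omega>)^2 \<partial>M) \<le> V + C^2" using L2(2) steps(2) unfolding B_def by simp
  have B_meas: "B \<in> borel_measurable M"
    unfolding B_def using Xm ttnn G_meas
    by (intro borel_measurable_sum borel_measurable_times borel_measurable_diff) auto
  text \<open>Drift part: the compensator, bounded by \<open>C\<close> times the total step length.\<close>
  define R where "R \<omega> = (\<Sum>i\<in>{1..m}. G i \<omega> * c i)" for \<omega>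
  have R_meas: "R \<in> borel_measurable M" unfolding R_def using G_meas by measurable
  have R_bound: "\<bar>R \<omega>\<bar> \<le> C" for \<omega>
  proof -
    have "\<bar>R \<omega>\<bar> \<le> (\<Sum>i\<in>{1..m}. \<bar>G i \<omega> * c i\<bar>)" unfolding R_def by (rule sum_abs)
    also have "\<dots> \<le> (\<Sum>i\<in>{1..m}. (tt (Suc i) - tt i) * C)"
    proof (rule sum_mono)
      fix i assume i: "i \<in> {1..m}"
      have "\<bar>c i\<bar> \<le> (tt (Suc i) - tt i) * C"
        unfolding c_def using levy_increment_moments(3)[OF L \<psi>] ttnn tle i by auto
      moreover have "\<bar>G i \<omega> * c i\<bar> \<le> 1 * \<bar>c i\<bar>" unfolding abs_mult using G_bound by (intro mult_right_mono) auto
      ultimately show "\<bar>G i \<omega> * c i\<bar> \<le> (tt (Suc i) - tt i) * C" by simp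
    qed
    finally show ?thesis using steps(1) by simp
  qed
  have "AE \<omega> in M. Y \<omega> = A \<omega> + B \<omega> + R \<omega>"
    using Y_eq by eventually_elim (simp add: A_def B_def R_def sum.distrib[symmetric] algebra_simps)
  from that[OF A_meas A2(1) EA B_meas B2 EB R_meas R_bound this] show ?thesis .
qed

lemma levy_simple_integral_tail:
  assumes L: "levy_process M X \<psi>" and \<psi>: "exponent_bounded V C \<psi>" and V: "0 \<le> V"
    and t: "0 < t" "t \<le> 1" and Y: "Y \<in> simple_integrals M X t" and K: "C < K"
  shows "measure (completion M) {\<omega>\<in>space M. \<bar>Y \<omega>\<bar> > K} \<le> 8 * (V + C^2) / (K - C)^2"
proof -
  obtain A B R where "A \<in> borel_measurable M" "integrable M (\<lambda>\<omega>. (A \<omega>)^2)"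
    "(\<integral>\<omega>. (A \<omega>)^2 \<partial>M) \<le> V + C^2"
    "B \<in> borel_measurable M" "integrable M (\<lambda>\<omega>. (B \<omega>)^2)" "(\<integral>\<omega>. (B \<omega>)^2 \<partial>M) \<le> V + C^2"
    "R \<in> borel_measurable M" "\<And>\<omega>. \<bar>R \<omega>\<bar> \<le> C" "AE \<omega> in M. Y \<omega> = A \<omega> + B \<omega> + R \<omega>"
    using levy_simple_integral_decomposition[OF L \<psi> V t Y] by blast
  from tail_bound_two_L2_one_bounded[OF levy_processD(1)[OF L] this K] show ?thesis .
qed

text \<open>The zero integrand is simple, so the suprema defining uniform tightness range over
  nonempty sets.\<close>
lemma simple_integrals_nonempty:
  assumes "0 \<le> t" shows "simple_integrals M X t \<noteq> {}"
proof -
  define tt :: "nat \<Rightarrow> real" where "tt i = (if i = 0 then 0 else t)" for i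
  have zero: "completed_natural_measurable M X s (\<lambda>\<omega>. 0)" for s
    unfolding completed_natural_measurable_def by (intro bexI[of _ "\<lambda>_. 0"]) auto
  have "(\<lambda>\<omega>. 0 * (X t \<omega> - X 0 \<omega>) + (\<Sum>i\<in>{1..0::nat}. 0 * (X (tt (Suc i)) \<omega> - X (tt i) \<omega>)))
        \<in> simple_integrals M X t"
    unfolding simple_integrals_def
    by (intro CollectI exI[of _ "0::nat"] exI[of _ tt] exI[of _ "\<lambda>_ _. 0"] conjI refl)
       (use zero assms in \<open>auto simp: tt_def\<close>)
  then show ?thesis by blast
qed

lemma SUP_nonneg_bounded:
  fixes f :: "'b \<Rightarrow> real"
  assumes "A \<noteq> {}" and "\<And>x. x \<in> A \<Longrightarrow> 0 \<le> f x \<and> f x \<le> b"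
  shows "0 \<le> (SUP x\<in>A. f x) \<and> (SUP x\<in>A. f x) \<le> b"
proof -
  obtain x0 where x0: "x0 \<in> A" using assms(1) by blast
  have bdd: "bdd_above (f ` A)" using assms(2) by (intro bdd_aboveI2) auto
  have "0 \<le> (SUP x\<in>A. f x)" by (rule cSUP_upper2[OF bdd x0]) (use assms(2)[OF x0] in auto)
  moreover have "(SUP x\<in>A. f x) \<le> b" by (rule cSUP_least) (use assms in auto)
  ultimately show ?thesis ..
qed

theorem uniformly_tight_levy_family:
  fixes M :: "'i \<Rightarrow> 'a measure" and X :: "'i \<Rightarrow> real \<Rightarrow> 'a \<Rightarrow> real"
  assumes I: "I \<noteq> {}" and L: "\<And>a. a \<in> I \<Longrightarrow> levy_process (M a) (X a) (\<psi> a)"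
    and \<psi>: "\<And>a. a \<in> I \<Longrightarrow> exponent_bounded V C (\<psi> a)" and V: "0 \<le> V"
  shows "uniformly_tight I M X"
  unfolding uniformly_tight_def
proof
  fix t :: real assume t: "t \<in> {0<..1}"
  define F where "F a K = (SUP Y\<in>simple_integrals (M a) (X a) t.
      measure (completion (M a)) {\<omega> \<in> space (M a). \<bar>Y \<omega>\<bar> > K})" for a K
  define bound where "bound K = 8 * (V + C^2) / (K - C)^2" for K
  have F_bound: "0 \<le> F a K \<and> F a K \<le> bound K" if a: "a \<in> I" and K: "C < K" for a K
    unfolding F_def bound_def
    by (rule SUP_nonneg_bounded[OF simple_integrals_nonempty])
       (use t K levy_simple_integral_tail[OF L[OF a] \<psi>[OF a] V] in auto)
  have SUP_bound: "0 \<le> (SUP a\<in>I. F a K) \<and> (SUP a\<in>I. F a K) \<le> bound K" if "C < K" for K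
    by (rule SUP_nonneg_bounded[OF I]) (use F_bound that in auto)
  have "filterlim (\<lambda>K. (K - C)^2) at_top at_top"
    by (intro filterlim_pow_at_top filterlim_tendsto_add_at_top[OF tendsto_const filterlim_ident, where c="-C", simplified]) auto
  then have bound_lim: "(bound \<longlongrightarrow> 0) at_top"
    unfolding bound_def by (intro tendsto_divide_0[OF tendsto_const] filterlim_at_top_imp_at_infinity)
  have ev: "eventually (\<lambda>K. C < K) at_top" by (rule eventually_gt_at_top)
  show "((\<lambda>K. SUP a\<in>I. SUP Y\<in>simple_integrals (M a) (X a) t.
                 measure (completion (M a)) {\<omega> \<in> space (M a). \<bar>Y \<omega>\<bar> > K}) \<longlongrightarrow> 0) at_top"
    unfolding F_def[symmetric]
  proof (rule tendsto_sandwich[OF _ _ tendsto_const bound_lim])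
    show "eventually (\<lambda>K. 0 \<le> (SUP a\<in>I. F a K)) at_top"
      using ev by eventually_elim (use SUP_bound in auto)
    show "eventually (\<lambda>K. (SUP a\<in>I. F a K) \<le> bound K) at_top"
      using ev by eventually_elim (use SUP_bound in auto)
  qed
qed

section \<open>Bounds on Levy--Khintchine exponents\<close>

text \<open>The real part of \<open>\<integral> (iexp (h x) - 1 - i(\<dots>)) d\<Lambda>\<close> is \<open>\<integral> (cos (h x) - 1) d\<Lambda>\<close>, which is at
  least \<open>-h\<^sup>2/2 \<integral> x\<^sup>2 d\<Lambda>\<close>. (If the integrand is not integrable the integral is 0.)\<close>
lemma Re_levy_integral_lower:
  fixes \<Lambda> :: "real measure" and f :: "real \<Rightarrow> complex"
  assumes I2: "integrable \<Lambda> (\<lambda>x. x^2)" and Re_f: "\<And>x. Re (f x) = cos (h * x) - 1"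
  shows "- (LINT x|\<Lambda>. x^2) * h^2 / 2 \<le> Re (CLINT x|\<Lambda>. f x)"
proof (cases "integrable \<Lambda> f")
  case True
  have "(LINT x|\<Lambda>. - (h^2/2) * x^2) \<le> (LINT x|\<Lambda>. Re (f x))"
  proof (rule integral_mono)
    show "integrable \<Lambda> (\<lambda>x. - (h^2/2) * x^2)" using I2 by simp
    show "integrable \<Lambda> (\<lambda>x. Re (f x))" using integrable_Re[OF True] .
    show "- (h^2/2) * x^2 \<le> Re (f x)" for x
      using cos_sin_quadratic_bounds(1)[of "h*x"] by (simp add: Re_f power_mult_distrib abs_le_iff)
  qed
  then show ?thesis by (simp add: integral_Re[OF True] algebra_simps)
next
  case False
  have "0 \<le> (LINT x|\<Lambda>. x^2)" by (rule integral_nonneg_AE) auto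
  then show ?thesis using not_integrable_integral_eq[OF False] by simp
qed

lemma Im_levy_integral_bound:
  fixes \<Lambda> :: "real measure" and f :: "real \<Rightarrow> complex"
  assumes g: "integrable \<Lambda> g" and Im_f: "\<And>x. \<bar>Im (f x)\<bar> \<le> g x"
  shows "\<bar>Im (CLINT x|\<Lambda>. f x)\<bar> \<le> (LINT x|\<Lambda>. g x)"
proof (cases "integrable \<Lambda> f")
  case True
  have "\<bar>LINT x|\<Lambda>. Im (f x)\<bar> \<le> (LINT x|\<Lambda>. \<bar>Im (f x)\<bar>)" by (rule integral_abs_bound)
  also have "\<dots> \<le> (LINT x|\<Lambda>. g x)"
    by (rule integral_mono) (use integrable_Im[OF True] g Im_f in auto)
  finally show ?thesis by (simp add: integral_Im[OF True])
next
  case False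
  have "0 \<le> (LINT x|\<Lambda>. g x)" by (rule integral_nonneg_AE) (use Im_f abs_ge_zero order_trans in blast)
  then show ?thesis using not_integrable_integral_eq[OF False] by simp
qed

lemma subordinator_exponent_bounded:
  fixes \<Lambda> :: "real measure"
  assumes I2: "integrable \<Lambda> (\<lambda>x. x^2)" and I1: "integrable \<Lambda> (\<lambda>x. \<bar>x\<bar>)"
  shows "exponent_bounded (LINT x|\<Lambda>. x^2) (LINT x|\<Lambda>. \<bar>x\<bar>) (driftless_subordinator_exponent \<Lambda>)"
  unfolding exponent_bounded_def driftless_subordinator_exponent_def
proof (intro allI impI conjI)
  fix h :: real assume h: "0 < h \<and> h \<le> 1"
  show "- (LINT x|\<Lambda>. x^2) * h^2 / 2 \<le> Re (CLINT x|\<Lambda>. iexp (h * x) - 1)"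
    by (rule Re_levy_integral_lower[OF I2]) (simp add: Re_exp)
  have "\<bar>Im (CLINT x|\<Lambda>. iexp (h * x) - 1)\<bar> \<le> (LINT x|\<Lambda>. h * \<bar>x\<bar>)"
    by (rule Im_levy_integral_bound) (use I1 h abs_sin_x_le_abs_x[of "h * _"] in \<open>auto simp: Im_exp abs_mult\<close>)
  then show "\<bar>Im (CLINT x|\<Lambda>. iexp (h * x) - 1)\<bar> \<le> (LINT x|\<Lambda>. \<bar>x\<bar>) * h"
    by (simp add: mult.commute)
qed

text \<open>The compensated sine term of the Levy--Khintchine integrand is \<open>O(h x\<^sup>2)\<close> for \<open>h \<le> 1\<close>:
  quadratically small on \<open>[-1, 1]\<close>, and \<open>|sin (h x)| \<le> h |x| \<le> h x\<^sup>2\<close> outside.\<close>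
lemma compensated_sin_bound:
  fixes h x :: real
  assumes h: "0 < h" "h \<le> 1"
  shows "\<bar>sin (h * x) - h * x * indicator {-1..1} x\<bar> \<le> h * x^2"
proof (cases "x \<in> {-1..1}")
  case True
  have "\<bar>sin (h * x) - h * x\<bar> \<le> (h*x)^2/2" by (rule cos_sin_quadratic_bounds(2))
  also have "\<dots> = h * (h * x^2) / 2" by (simp add: power2_eq_square)
  also have "\<dots> \<le> h * x^2"
  proof -
    have "h * (h * x^2) \<le> 1 * (h * x^2)" using h by (intro mult_right_mono) auto
    moreover have "0 \<le> h * x^2" using h by simp
    ultimately show ?thesis by linarith
  qed
  finally show ?thesis using True by simp
next
  case False
  then have "1 < \<bar>x\<bar>" by auto
  have "\<bar>sin (h * x)\<bar> \<le> h * \<bar>x\<bar>" using abs_sin_x_le_abs_x[of "h * x"] h by (simp add: abs_mult)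
  also have "\<dots> \<le> h * x^2"
  proof -
    have "\<bar>x\<bar> * 1 \<le> \<bar>x\<bar> * \<bar>x\<bar>" using \<open>1 < \<bar>x\<bar>\<close> by (intro mult_left_mono) auto
    then have "\<bar>x\<bar> \<le> x^2" by (simp add: power2_eq_square abs_mult_self_eq)
    then show ?thesis using h by (intro mult_left_mono) auto
  qed
  finally show ?thesis using False by simp
qed

lemma triplet_exponent_bounded:
  fixes \<Lambda> :: "real measure"
  assumes I2: "integrable \<Lambda> (\<lambda>x. x^2)"
  shows "exponent_bounded (LINT x|\<Lambda>. x^2) (LINT x|\<Lambda>. x^2) (triplet_exponent 0 0 \<Lambda>)"
  unfolding exponent_bounded_def
proof (intro allI impI conjI)
  fix h :: real assume h: "0 < h \<and> h \<le> 1"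
  define f where "f x = iexp (h * x) - 1 - \<i> * complex_of_real (h * x * indicator {-1..1} x)" for x
  have te: "triplet_exponent 0 0 \<Lambda> h = (CLINT x|\<Lambda>. f x)"
    unfolding triplet_exponent_def f_def by simp
  show "- (LINT x|\<Lambda>. x^2) * h^2 / 2 \<le> Re (triplet_exponent 0 0 \<Lambda> h)"
    unfolding te by (rule Re_levy_integral_lower[OF I2]) (simp add: f_def Re_exp)
  have "\<bar>Im (CLINT x|\<Lambda>. f x)\<bar> \<le> (LINT x|\<Lambda>. h * x^2)"
    by (rule Im_levy_integral_bound) (use I2 h compensated_sin_bound in \<open>auto simp: f_def Im_exp\<close>)
  then show "\<bar>Im (triplet_exponent 0 0 \<Lambda> h)\<bar> \<le> (LINT x|\<Lambda>. x^2) * h"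
    unfolding te by (simp add: mult.commute)
qed

section \<open>Moments of the two Levy measures\<close>

lemma levy_measure_moment:
  fixes f g :: "real \<Rightarrow> real"
  assumes f: "f \<in> borel_measurable borel" "\<And>x. 0 \<le> f x" and g: "g \<in> borel_measurable borel" "\<And>x. 0 \<le> g x"
    and bound: "(\<integral>\<^sup>+x. ennreal (f x * g x) \<partial>lborel) \<le> ennreal c" and c: "0 \<le> c"
  shows "integrable (levy_measure_of_density f) g" and "(LINT x|levy_measure_of_density f. g x) \<le> c"
proof -
  define \<Lambda> where "\<Lambda> = levy_measure_of_density f"
  have gm: "g \<in> borel_measurable \<Lambda>" using g by (simp add: \<Lambda>_def levy_measure_of_density_def)
  have nn: "(\<integral>\<^sup>+x. ennreal (g x) \<partial>\<Lambda>) = (\<integral>\<^sup>+x. ennreal (f x * g x) \<partial>lborel)"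
    unfolding \<Lambda>_def levy_measure_of_density_def
    using f g by (subst nn_integral_density) (auto simp: ennreal_mult)
  show "integrable (levy_measure_of_density f) g"
    unfolding \<Lambda>_def[symmetric]
    by (rule integrableI_bounded) (use gm g nn bound in \<open>auto intro: le_less_trans\<close>)
  have "(LINT x|\<Lambda>. g x) = enn2real (\<integral>\<^sup>+x. ennreal (g x) \<partial>\<Lambda>)"
    by (rule integral_eq_nn_integral) (use gm g in auto)
  also have "\<dots> \<le> c" unfolding nn using enn2real_mono[OF bound] c by simp
  finally show "(LINT x|levy_measure_of_density f. g x) \<le> c" unfolding \<Lambda>_def .
qed

lemma tss_density_measurable[measurable]: "tss_density \<alpha> \<in> borel_measurable borel"
  unfolding tss_density_def by measurable

lemma tss_power_moment:
  assumes a: "0 < \<alpha>" "\<alpha> < 1" and p: "0 < p"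
  shows "(\<integral>\<^sup>+x. ennreal (tss_density \<alpha> x * x powr (p + \<alpha>)) \<partial>lborel) = ennreal (Gamma p / Gamma (1 - \<alpha>))"
proof -
  have G: "0 < Gamma (1 - \<alpha>)" using a by (intro Gamma_real_pos) auto
  have pt: "tss_density \<alpha> x * x powr (p + \<alpha>) = (1 / Gamma (1 - \<alpha>)) * (indicator {0..} x * x powr (p - 1) / exp x)" for x
  proof (cases "0 < x")
    case True
    have "x powr (p + \<alpha>) / x powr (1 + \<alpha>) = x powr (p - 1)" using True by (simp add: powr_diff[symmetric])
    then show ?thesis using True G unfolding tss_density_def
      by (simp add: exp_minus field_simps)
  next
    case False
    then show ?thesis unfolding tss_density_def by (cases "x = 0") auto
  qed
  have "(\<integral>\<^sup>+x. ennreal (tss_density \<alpha> x * x powr (p + \<alpha>)) \<partial>lborel)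
      = (\<integral>\<^sup>+x. ennreal (1 / Gamma (1 - \<alpha>)) * ennreal (indicator {0..} x * x powr (p - 1) / exp x) \<partial>lborel)"
    by (intro nn_integral_cong, simp only: pt, rule ennreal_mult) (use G in auto)
  also have "\<dots> = ennreal (1 / Gamma (1 - \<alpha>)) * (\<integral>\<^sup>+x. ennreal (indicator {0..} x * x powr (p - 1) / exp x) \<partial>lborel)"
    by (rule nn_integral_cmult) measurable
  also have "\<dots> = ennreal (1 / Gamma (1 - \<alpha>)) * ennreal (Gamma p)"
    using Gamma_conv_nn_integral_real[OF p] by simp
  also have "\<dots> = ennreal (1 / Gamma (1 - \<alpha>) * Gamma p)"
    by (rule ennreal_mult[symmetric]) (use G Gamma_real_pos[OF p] in auto)
  also have "\<dots> = ennreal (Gamma p / Gamma (1 - \<alpha>))" by simp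
  finally show ?thesis .
qed

text \<open>Consequently the second moment is \<open>1 - \<alpha>\<close> and the first absolute moment is \<open>1\<close>.\<close>
lemma tss_moments:
  assumes a: "0 < \<alpha>" "\<alpha> < 1"
  defines "\<Lambda> \<equiv> levy_measure_of_density (tss_density \<alpha>)"
  shows "integrable \<Lambda> (\<lambda>x. x^2)" "(LINT x|\<Lambda>. x^2) \<le> 1"
    and "integrable \<Lambda> (\<lambda>x. \<bar>x\<bar>)" "(LINT x|\<Lambda>. \<bar>x\<bar>) \<le> 1"
proof -
  have G: "0 < Gamma (1 - \<alpha>)" using a by (intro Gamma_real_pos) auto
  have tss0: "0 \<le> tss_density \<alpha> x" for x using G unfolding tss_density_def by auto
  have tss_neg: "tss_density \<alpha> x = 0" if "x \<le> 0" for x using that unfolding tss_density_def by auto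
  have "tss_density \<alpha> x * x^2 = tss_density \<alpha> x * x powr ((2 - \<alpha>) + \<alpha>)" for x
    by (cases "0 < x") (auto simp: tss_neg powr_numeral)
  then have "(\<integral>\<^sup>+x. ennreal (tss_density \<alpha> x * x^2) \<partial>lborel) = ennreal (Gamma (2 - \<alpha>) / Gamma (1 - \<alpha>))"
    using tss_power_moment[of \<alpha> "2 - \<alpha>"] a by (simp only:)
  also have "Gamma (2 - \<alpha>) = (1 - \<alpha>) * Gamma (1 - \<alpha>)"
    using Gamma_plus1[of "1 - \<alpha>"] a nonpos_Ints_nonpos[of "1 - \<alpha>"] by (auto simp: algebra_simps)
  finally have "(\<integral>\<^sup>+x. ennreal (tss_density \<alpha> x * x^2) \<partial>lborel) \<le> ennreal 1" using G a by simp
  from levy_measure_moment[OF _ tss0 _ _ this]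
  show "integrable \<Lambda> (\<lambda>x. x^2)" "(LINT x|\<Lambda>. x^2) \<le> 1" unfolding \<Lambda>_def by auto
  have "tss_density \<alpha> x * \<bar>x\<bar> = tss_density \<alpha> x * x powr ((1 - \<alpha>) + \<alpha>)" for x
    by (cases "0 < x") (auto simp: tss_neg)
  then have "(\<integral>\<^sup>+x. ennreal (tss_density \<alpha> x * \<bar>x\<bar>) \<partial>lborel) = ennreal (Gamma (1 - \<alpha>) / Gamma (1 - \<alpha>))"
    using tss_power_moment[of \<alpha> "1 - \<alpha>"] a by (simp only:)
  then have "(\<integral>\<^sup>+x. ennreal (tss_density \<alpha> x * \<bar>x\<bar>) \<partial>lborel) \<le> ennreal 1" using G by simp
  from levy_measure_moment[OF _ tss0 _ _ this]
  show "integrable \<Lambda> (\<lambda>x. \<bar>x\<bar>)" "(LINT x|\<Lambda>. \<bar>x\<bar>) \<le> 1" unfolding \<Lambda>_def by auto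
qed

lemma powr_le_one_plus_square:
  fixes y \<nu> :: real
  assumes y: "0 < y" and \<nu>: "0 \<le> \<nu>" "\<nu> \<le> 1"
  shows "y powr (2 - \<nu>) \<le> 1 + y powr 2"
proof (cases "y \<le> 1")
  case True
  then have "y powr (2 - \<nu>) \<le> 1" using y \<nu> by (intro powr_le1) auto
  then show ?thesis by (simp add: add_increasing2)
next
  case False
  then have "y powr (2 - \<nu>) \<le> y powr 2" using \<nu> by (intro powr_mono) auto
  then show ?thesis by simp
qed

lemma exp_integral_one: "(\<integral>\<^sup>+u. ennreal (indicator {0..} u * exp (- u)) \<partial>lborel) = 1"
proof -
  have "(\<integral>\<^sup>+u. ennreal (indicator {0..} u * exp (- u)) \<partial>lborel) =
        (\<integral>\<^sup>+u. ennreal (indicator {0..} u * u powr (1 - 1) / exp u) \<partial>lborel)"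
    by (intro nn_integral_cong_AE eventually_mono[OF AE_lborel_singleton[of 0]])
       (auto simp: indicator_def exp_minus field_simps)
  also have "\<dots> = Gamma 1" using Gamma_conv_nn_integral_real[of 1] by simp
  finally show ?thesis by simp
qed

text \<open>\<open>\<integral>\<^sub>0\<^sup>\<infinity> y\<^sup>2\<^sup>-\<^sup>\<nu> exp (-y) dy \<le> \<Gamma>(1) + \<Gamma>(3) = 3\<close> for \<open>0 \<le> \<nu> \<le> 1\<close>.\<close>
lemma gamma_integral_bound:
  assumes \<nu>: "0 \<le> \<nu>" "\<nu> \<le> 1"
  shows "(\<integral>\<^sup>+y. ennreal (indicator {0<..} y * y powr (2 - \<nu>) * exp (- y)) \<partial>lborel) \<le> 3"
proof -
  have "(\<integral>\<^sup>+y. ennreal (indicator {0<..} y * y powr (2 - \<nu>) * exp (- y)) \<partial>lborel) \<le>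
        (\<integral>\<^sup>+y. ennreal (indicator {0..} y * y powr (1 - 1) / exp y) + ennreal (indicator {0..} y * y powr (3 - 1) / exp y) \<partial>lborel)"
  proof (intro nn_integral_mono)
    fix y :: real
    show "ennreal (indicator {0<..} y * y powr (2 - \<nu>) * exp (- y)) \<le>
          ennreal (indicator {0..} y * y powr (1 - 1) / exp y) + ennreal (indicator {0..} y * y powr (3 - 1) / exp y)"
    proof (cases "0 < y")
      case True
      have "y powr (2 - \<nu>) \<le> 1 + y powr 2" by (rule powr_le_one_plus_square[OF True \<nu>])
      then have "y powr (2 - \<nu>) * exp (- y) \<le> (1 + y powr 2) * exp (- y)" by (intro mult_right_mono) auto
      then show ?thesis using True
        by (simp add: ennreal_plus[symmetric] del: ennreal_plus exp_minus_inverse)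
           (simp add: exp_minus field_simps)
    qed auto
  qed
  also have "\<dots> = (\<integral>\<^sup>+y. ennreal (indicator {0..} y * y powr (1 - 1) / exp y) \<partial>lborel) +
                  (\<integral>\<^sup>+y. ennreal (indicator {0..} y * y powr (3 - 1) / exp y) \<partial>lborel)"
    by (rule nn_integral_add) auto
  also have "\<dots> = ennreal (Gamma 1) + ennreal (Gamma 3)"
    using Gamma_conv_nn_integral_real[of 1] Gamma_conv_nn_integral_real[of 3] by simp
  also have "\<dots> = 3"
  proof -
    have "Gamma (3::real) = 2" using Gamma_fact[of 2] by (simp add: numeral_eq_Suc)
    then show ?thesis by simp
  qed
  finally show ?thesis .
qed

text \<open>Rescaling \<open>x = y / c\<close> in the previous bound.\<close>
lemma scaled_gamma_integral_bound:
  assumes \<nu>: "0 \<le> \<nu>" "\<nu> \<le> 1" and c: "1 \<le> c"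
  shows "(\<integral>\<^sup>+x. ennreal (indicator {0<..} x * x powr (2 - \<nu>) * exp (- (x * c))) \<partial>lborel) \<le> ennreal (3 * c powr (\<nu> - 3))"
proof -
  have c0: "0 < c" using c by simp
  have "(\<integral>\<^sup>+x. ennreal (indicator {0<..} x * x powr (2 - \<nu>) * exp (- (x * c))) \<partial>lborel) =
        ennreal \<bar>1/c\<bar> * (\<integral>\<^sup>+y. ennreal (indicator {0<..} (0 + 1/c * y) * (0 + 1/c * y) powr (2 - \<nu>) * exp (- ((0 + 1/c * y) * c))) \<partial>lborel)"
    by (rule nn_integral_real_affine) (use c0 in auto)
  also have "(\<integral>\<^sup>+y. ennreal (indicator {0<..} (0 + 1/c * y) * (0 + 1/c * y) powr (2 - \<nu>) * exp (- ((0 + 1/c * y) * c))) \<partial>lborel)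
      = (\<integral>\<^sup>+y. ennreal (c powr (\<nu> - 2)) * ennreal (indicator {0<..} y * y powr (2 - \<nu>) * exp (- y)) \<partial>lborel)"
  proof (rule nn_integral_cong)
    fix y :: real
    show "ennreal (indicator {0<..} (0 + 1/c * y) * (0 + 1/c * y) powr (2 - \<nu>) * exp (- ((0 + 1/c * y) * c))) =
          ennreal (c powr (\<nu> - 2)) * ennreal (indicator {0<..} y * y powr (2 - \<nu>) * exp (- y))"
    proof (cases "0 < y")
      case True
      have "(1/c * y) powr (2 - \<nu>) = (1/c) powr (2 - \<nu>) * y powr (2 - \<nu>)"
        using powr_mult[of "1/c" y "2 - \<nu>"] True c0 by simp
      also have "(1/c) powr (2 - \<nu>) = c powr (\<nu> - 2)"
      proof -
        have "(1/c) powr (2 - \<nu>) = 1 / c powr (2 - \<nu>)" using c0 by (simp add: powr_divide)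
        also have "\<dots> = c powr (- (2 - \<nu>))" using powr_minus_divide[of c "2 - \<nu>"] by simp
        finally show ?thesis by simp
      qed
      finally have e: "(1/c * y) powr (2 - \<nu>) = c powr (\<nu> - 2) * y powr (2 - \<nu>)" .
      have "0 < 1/c * y" using True c0 by simp
      then show ?thesis using True c0 e
        by (simp add: ennreal_mult[symmetric] indicator_def mult.assoc)
    next
      case False
      then have "\<not> 0 < 1/c * y" using c0 by (simp add: zero_less_divide_iff)
      then show ?thesis using False by (simp add: indicator_def)
    qed
  qed
  also have "\<dots> = ennreal (c powr (\<nu> - 2)) * (\<integral>\<^sup>+y. ennreal (indicator {0<..} y * y powr (2 - \<nu>) * exp (- y)) \<partial>lborel)"
    by (rule nn_integral_cmult) measurable
  also have "ennreal \<bar>1/c\<bar> * (ennreal (c powr (\<nu> - 2)) * (\<integral>\<^sup>+y. ennreal (indicator {0<..} y * y powr (2 - \<nu>) * exp (- y)) \<partial>lborel))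
      \<le> ennreal \<bar>1/c\<bar> * (ennreal (c powr (\<nu> - 2)) * 3)"
    by (intro mult_left_mono gamma_integral_bound \<nu>) auto
  also have "\<dots> = ennreal (3 * c powr (\<nu> - 3))"
  proof -
    have "1/c * c powr (\<nu> - 2) = c powr (\<nu> - 3)"
      using c0 by (simp add: powr_diff field_simps powr_numeral power3_eq_cube power2_eq_square)
    moreover have "ennreal \<bar>1/c\<bar> * (ennreal (c powr (\<nu> - 2)) * 3) = ennreal (\<bar>1/c\<bar> * c powr (\<nu> - 2)) * ennreal 3"
      by (subst ennreal_mult') (auto simp: mult.assoc)
    moreover have "ennreal (3 * c powr (\<nu> - 3)) = ennreal (c powr (\<nu> - 3)) * ennreal 3"
      by (subst ennreal_mult'') (auto simp: mult.commute)
    ultimately show ?thesis using c0 by simp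
  qed
  finally show ?thesis .
qed

lemma borel_measurable_cosh_real[measurable]: "(cosh :: real \<Rightarrow> real) \<in> borel_measurable borel"
  by (intro borel_measurable_continuous_onI continuous_intros)

lemma bessel_K_measurable[measurable]: "bessel_K \<nu> \<in> borel_measurable borel"
  unfolding bessel_K_def set_lebesgue_integral_def by measurable

lemma mts_density_measurable[measurable]: "mts_density \<alpha> \<in> borel_measurable borel"
  unfolding mts_density_def by measurable

lemma bessel_K_nonneg: "0 \<le> bessel_K \<nu> r"
  unfolding bessel_K_def set_lebesgue_integral_def
  by (rule integral_nonneg_AE) (auto simp: indicator_def intro!: AE_I2 less_imp_le[OF cosh_real_pos])

lemma bessel_K_le:
  "ennreal (bessel_K \<nu> r) \<le> (\<integral>\<^sup>+u. ennreal (indicator {0..} u * exp (- r * cosh u) * cosh (\<nu> * u)) \<partial>lborel)"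
proof -
  have "bessel_K \<nu> r = enn2real (\<integral>\<^sup>+u. ennreal (indicator {0..} u * (exp (- r * cosh u) * cosh (\<nu> * u))) \<partial>lborel)"
    unfolding bessel_K_def set_lebesgue_integral_def
    by (subst integral_eq_nn_integral) (auto simp: indicator_def intro!: AE_I2 less_imp_le[OF cosh_real_pos])
  then show ?thesis by (simp add: ennreal_enn2real_if mult.assoc)
qed

lemma cosh_decay:
  fixes \<nu> u :: real
  assumes \<nu>: "0 \<le> \<nu>" "\<nu> \<le> 1" and u: "0 \<le> u"
  shows "cosh (\<nu> * u) * cosh u powr (\<nu> - 3) \<le> 2 * exp (- u)"
proof -
  have c1: "1 \<le> cosh u" by (rule cosh_real_ge_1)
  have "cosh (\<nu> * u) \<le> cosh u"
    using \<nu> u by (subst cosh_real_nonneg_le_iff) (auto simp: mult_left_le_one_le)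
  moreover have "cosh u powr (\<nu> - 3) \<le> cosh u powr (-2)" using \<nu> c1 by (intro powr_mono) auto
  ultimately have "cosh (\<nu> * u) * cosh u powr (\<nu> - 3) \<le> cosh u * cosh u powr (-2)"
    by (intro mult_mono) auto
  also have "cosh u * cosh u powr (-2) = 1 / cosh u"
    using c1 by (simp add: powr_minus_divide power2_eq_square)
  also have "1 / cosh u \<le> 2 * exp (- u)"
  proof -
    have "exp u / 2 \<le> cosh u" unfolding cosh_def by simp
    then have "1 / cosh u \<le> 1 / (exp u / 2)" by (intro divide_left_mono) auto
    then show ?thesis by (simp add: exp_minus field_simps)
  qed
  finally show ?thesis .
qed

text \<open>Integrand obtained from \<open>\<integral>\<^sub>0\<^sup>\<infinity> x\<^sup>2\<^sup>-\<^sup>\<nu> K\<^sub>\<nu>(x) / \<pi> dx\<close> by inserting the integral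
  representation \<open>K\<^sub>\<nu>(x) = \<integral>\<^sub>0\<^sup>\<infinity> exp (-x cosh u) cosh (\<nu> u) du\<close>.\<close>
definition bessel_moment_kernel :: "real \<Rightarrow> real \<Rightarrow> real \<Rightarrow> ennreal" where
  "bessel_moment_kernel \<nu> x u = ennreal (indicator {0<..} x * x powr (2 - \<nu>) / pi *
      (indicator {0..} u * exp (- x * cosh u) * cosh (\<nu> * u)))"

lemma bessel_moment_kernel_measurable[measurable]:
  "(\<lambda>(x, u). bessel_moment_kernel \<nu> x u) \<in> borel_measurable (lborel \<Otimes>\<^sub>M lborel)"
  unfolding bessel_moment_kernel_def by measurable

lemma mts_moment_le_kernel:
  fixes \<alpha> x :: real
  defines "\<nu> \<equiv> \<alpha> + 1/2"
  shows "ennreal (mts_density \<alpha> x * x^2) \<le>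
           (\<integral>\<^sup>+u. bessel_moment_kernel \<nu> x u \<partial>lborel) + (\<integral>\<^sup>+u. bessel_moment_kernel \<nu> (- x) u \<partial>lborel)"
proof (cases "x = 0")
  case True then show ?thesis by (simp add: mts_density_def)
next
  case False
  define r where "r = \<bar>x\<bar>"
  have r: "0 < r" using False r_def by simp
  have "mts_density \<alpha> x * x^2 = (r powr (2 - \<nu>) / pi) * bessel_K \<nu> r"
  proof -
    have "x^2 = r powr 2" using r r_def by (simp add: powr_numeral)
    moreover have "r powr 2 / r powr \<nu> = r powr (2 - \<nu>)" using r by (simp add: powr_diff)
    ultimately show ?thesis using False r unfolding mts_density_def r_def \<nu>_def
      by (simp add: field_simps)
  qed
  then have "ennreal (mts_density \<alpha> x * x^2) = ennreal (r powr (2 - \<nu>) / pi) * ennreal (bessel_K \<nu> r)"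
    by (simp only:) (rule ennreal_mult, simp, rule bessel_K_nonneg)
  also have "\<dots> \<le> ennreal (r powr (2 - \<nu>) / pi) *
      (\<integral>\<^sup>+u. ennreal (indicator {0..} u * exp (- r * cosh u) * cosh (\<nu> * u)) \<partial>lborel)"
    by (intro mult_left_mono bessel_K_le) auto
  also have "\<dots> = (\<integral>\<^sup>+u. ennreal (r powr (2 - \<nu>) / pi) *
      ennreal (indicator {0..} u * exp (- r * cosh u) * cosh (\<nu> * u)) \<partial>lborel)"
    by (rule nn_integral_cmult[symmetric]) measurable
  also have "\<dots> = (\<integral>\<^sup>+u. bessel_moment_kernel \<nu> r u \<partial>lborel)"
    unfolding bessel_moment_kernel_def using r
    by (intro nn_integral_cong) (simp add: ennreal_mult[symmetric] indicator_def less_imp_le[OF cosh_real_pos])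
  also have "\<dots> \<le> (\<integral>\<^sup>+u. bessel_moment_kernel \<nu> x u \<partial>lborel) + (\<integral>\<^sup>+u. bessel_moment_kernel \<nu> (- x) u \<partial>lborel)"
    unfolding r_def by (cases "0 \<le> x") auto
  finally show ?thesis .
qed

text \<open>For fixed \<open>u \<ge> 0\<close>, the \<open>x\<close>-integral of the kernel is a rescaled Gamma integral, and the
  factor \<open>cosh (\<nu> u) cosh u\<^sup>\<nu>\<^sup>-\<^sup>3\<close> it produces decays like \<open>exp (-u)\<close>.\<close>
lemma bessel_moment_kernel_inner:
  assumes \<nu>: "0 \<le> \<nu>" "\<nu> \<le> 1"
  shows "(\<integral>\<^sup>+x. bessel_moment_kernel \<nu> x u \<partial>lborel) \<le> ennreal (indicator {0..} u * (6 / pi) * exp (- u))"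
proof (cases "0 \<le> u")
  case False
  then show ?thesis unfolding bessel_moment_kernel_def by (simp add: indicator_def)
next
  case True
  define k where "k = cosh (\<nu> * u) / pi"
  have k0: "0 \<le> k" unfolding k_def using less_imp_le[OF cosh_real_pos] by simp
  have "(\<integral>\<^sup>+x. bessel_moment_kernel \<nu> x u \<partial>lborel) =
      (\<integral>\<^sup>+x. ennreal k * ennreal (indicator {0<..} x * x powr (2 - \<nu>) * exp (- (x * cosh u))) \<partial>lborel)"
    unfolding bessel_moment_kernel_def k_def using True
    by (intro nn_integral_cong) (simp add: ennreal_mult[symmetric] indicator_def less_imp_le[OF cosh_real_pos] field_simps)
  also have "\<dots> = ennreal k * (\<integral>\<^sup>+x. ennreal (indicator {0<..} x * x powr (2 - \<nu>) * exp (- (x * cosh u))) \<partial>lborel)"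
    by (rule nn_integral_cmult) measurable
  also have "\<dots> \<le> ennreal k * ennreal (3 * cosh u powr (\<nu> - 3))"
    by (intro mult_left_mono scaled_gamma_integral_bound \<nu> cosh_real_ge_1) auto
  also have "\<dots> = ennreal (3 / pi * (cosh (\<nu> * u) * cosh u powr (\<nu> - 3)))"
    using k0 by (simp add: ennreal_mult[symmetric] k_def)
  also have "\<dots> \<le> ennreal (3 / pi * (2 * exp (- u)))"
    by (intro ennreal_leI mult_left_mono cosh_decay \<nu> True) auto
  also have "\<dots> = ennreal (indicator {0..} u * (6 / pi) * exp (- u))" using True by simp
  finally show ?thesis .
qed

lemma bessel_moment_kernel_integral:
  assumes \<nu>: "0 \<le> \<nu>" "\<nu> \<le> 1"
  shows "(\<integral>\<^sup>+x. (\<integral>\<^sup>+u. bessel_moment_kernel \<nu> x u \<partial>lborel) \<partial>lborel) \<le> ennreal (6 / pi)"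
proof -
  have "(\<integral>\<^sup>+x. (\<integral>\<^sup>+u. bessel_moment_kernel \<nu> x u \<partial>lborel) \<partial>lborel)
      = (\<integral>\<^sup>+u. (\<integral>\<^sup>+x. bessel_moment_kernel \<nu> x u \<partial>lborel) \<partial>lborel)"
    by (rule lborel_pair.Fubini'[symmetric]) measurable
  also have "\<dots> \<le> (\<integral>\<^sup>+u. ennreal (6 / pi) * ennreal (indicator {0..} u * exp (- u)) \<partial>lborel)"
    using bessel_moment_kernel_inner[OF \<nu>]
    by (intro nn_integral_mono) (simp add: ennreal_mult[symmetric] mult_ac)
  also have "\<dots> = ennreal (6 / pi) * (\<integral>\<^sup>+u. ennreal (indicator {0..} u * exp (- u)) \<partial>lborel)"
    by (rule nn_integral_cmult) measurable
  finally show ?thesis using exp_integral_one by simp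
qed

text \<open>Second moment of the modified tempered stable Levy measure: by symmetry it is twice
  the kernel integral, hence at most \<open>12 / \<pi> \<le> 4\<close>.\<close>
lemma mts_second_moment_integral:
  assumes a: "0 < \<alpha>" "\<alpha> < 1/2"
  shows "(\<integral>\<^sup>+x. ennreal (mts_density \<alpha> x * x^2) \<partial>lborel) \<le> ennreal 4"
proof -
  define \<nu> where "\<nu> = \<alpha> + 1/2"
  have \<nu>: "0 \<le> \<nu>" "\<nu> \<le> 1" using a \<nu>_def by auto
  define A where "A x = (\<integral>\<^sup>+u. bessel_moment_kernel \<nu> x u \<partial>lborel)" for x
  have A_meas: "A \<in> borel_measurable borel"
  proof -
    have "A \<in> borel_measurable lborel" unfolding A_def by measurable
    then show ?thesis by simp
  qed
  have "(\<integral>\<^sup>+x. ennreal (mts_density \<alpha> x * x^2) \<partial>lborel) \<le> (\<integral>\<^sup>+x. A x + A (- x) \<partial>lborel)"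
    unfolding A_def \<nu>_def by (intro nn_integral_mono mts_moment_le_kernel)
  also have "\<dots> = (\<integral>\<^sup>+x. A x \<partial>lborel) + (\<integral>\<^sup>+x. A (- x) \<partial>lborel)"
    by (rule nn_integral_add) (use A_meas in auto)
  also have "(\<integral>\<^sup>+x. A (- x) \<partial>lborel) = (\<integral>\<^sup>+x. A x \<partial>lborel)"
    using nn_integral_real_affine[OF A_meas, of "-1" 0] by simp
  also have "(\<integral>\<^sup>+x. A x \<partial>lborel) + (\<integral>\<^sup>+x. A x \<partial>lborel) \<le> ennreal (6 / pi) + ennreal (6 / pi)"
    unfolding A_def using bessel_moment_kernel_integral[OF \<nu>] by (intro add_mono)
  also have "\<dots> = ennreal (12 / pi)" by (simp flip: ennreal_plus)
  also have "\<dots> \<le> ennreal 4" using pi_gt3 by (intro ennreal_leI) (simp add: field_simps)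
  finally show ?thesis .
qed

lemma mts_moments:
  assumes a: "0 < \<alpha>" "\<alpha> < 1/2"
  defines "\<Lambda> \<equiv> levy_measure_of_density (mts_density \<alpha>)"
  shows "integrable \<Lambda> (\<lambda>x. x^2)" and "(LINT x|\<Lambda>. x^2) \<le> 4"
proof -
  have "0 \<le> mts_density \<alpha> x" for x unfolding mts_density_def using bessel_K_nonneg by auto
  from levy_measure_moment[OF _ this _ _ mts_second_moment_integral[OF a]]
  show "integrable \<Lambda> (\<lambda>x. x^2)" and "(LINT x|\<Lambda>. x^2) \<le> 4" unfolding \<Lambda>_def by auto
qed

lemma tss_exponent_bounded:
  assumes "0 < \<alpha>" "\<alpha> < 1"
  shows "exponent_bounded 1 1 (driftless_subordinator_exponent (levy_measure_of_density (tss_density \<alpha>)))"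
  using tss_moments[OF assms]
  by (intro exponent_bounded_mono[OF subordinator_exponent_bounded]) auto

lemma mts_exponent_bounded:
  assumes "0 < \<alpha>" "\<alpha> < 1/2"
  shows "exponent_bounded 4 4 (triplet_exponent 0 0 (levy_measure_of_density (mts_density \<alpha>)))"
  using mts_moments[OF assms]
  by (intro exponent_bounded_mono[OF triplet_exponent_bounded]) auto

theorem proposition3p6:
  fixes M :: "real \<Rightarrow> 'a measure" and X :: "real \<Rightarrow> real \<Rightarrow> 'a \<Rightarrow> real"
    and M' :: "real \<Rightarrow> 'b measure" and X' :: "real \<Rightarrow> real \<Rightarrow> 'b \<Rightarrow> real"
  shows "((\<forall>\<alpha>\<in>{0<..<1/2}. levy_process (M \<alpha>) (X \<alpha>)
              (driftless_subordinator_exponent (levy_measure_of_density (tss_density \<alpha>))))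
           \<longrightarrow> uniformly_tight {0<..<1/2} M X)
       \<and> ((\<forall>\<alpha>\<in>{0<..<1/2}. levy_process (M' \<alpha>) (X' \<alpha>)
              (triplet_exponent 0 0 (levy_measure_of_density (mts_density \<alpha>))))
           \<longrightarrow> uniformly_tight {0<..<1/2} M' X')"
proof (intro conjI impI)
  assume "\<forall>\<alpha>\<in>{0<..<1/2}. levy_process (M \<alpha>) (X \<alpha>)
            (driftless_subordinator_exponent (levy_measure_of_density (tss_density \<alpha>)))"
  then show "uniformly_tight {0<..<1/2} M X"
    by (intro uniformly_tight_levy_family[where V=1 and C=1]) (auto intro: tss_exponent_bounded)
next
  assume "\<forall>\<alpha>\<in>{0<..<1/2}. levy_process (M' \<alpha>) (X' \<alpha>)
            (triplet_exponent 0 0 (levy_measure_of_density (mts_density \<alpha>)))"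
  then show "uniformly_tight {0<..<1/2} M' X'"
    by (intro uniformly_tight_levy_family[where V=4 and C=4]) (auto intro: mts_exponent_bounded)
qed

end
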